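(* Let $\mathfrak g$ be a finite-dimensional complex simple Lie algebra and $q\in\mathbb C^\times$ not a root of unity. Suppose $\boldsymbol\varpi,\boldsymbol\varpi'\in\mathcal P_q$ satisfy $\boldsymbol\varpi'=T_w\boldsymbol\varpi$ for some $w\in W$. Then $\boldsymbol\varpi(\boldsymbol\varpi')^{-1}\in\mathcal Q_q$. Moreover, if $\boldsymbol\varpi\in\mathcal P_q^+$ then $\boldsymbol\varpi(\boldsymbol\varpi')^{-1}\in\mathcal Q_q^+$, and if $\boldsymbol\varpi\in\mathcal P_q^-$ then $\boldsymbol\varpi(\boldsymbol\varpi')^{-1}\in\mathcal Q_q^-$.
   Context: $I=\{1,\dots,n\}$, $(a_{ij})$ the Cartan matrix, $W$ the Weyl group with simple reflections $s_i$; $d_i$ positive integers with $(d_ia_{ij})$ symmetric, $q_i=q^{d_i}$. $\mathcal P_q=\mathbb A^n$, $\mathbb A$ the multiplicative group of rational functions with value 1 at $u=0$; $\boldsymbol\omega_{i,a}$ has $i$-th entry $1-au$ and others $1$; $\mathcal P_q^+$ is the monoid generated by $1$ and all $\boldsymbol\omega_{i,a}$, and $\mathcal P_q^-=\{\boldsymbol\beta^{-1}:\boldsymbol\beta\in\mathcal P_q^+\}$. Braid action: $(T_i\boldsymbol\varpi)_j=\varpi_j$ if $a_{ji}=0$; $\varpi_j(u)\varpi_i(q_iu)$ if $a_{ji}=-1$; $\varpi_j(u)\varpi_i(q^3u)\varpi_i(qu)$ if $a_{ji}=-2$; $\varpi_j(u)\varpi_i(q^5u)\varpi_i(q^3u)\varpi_i(qu)$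 if $a_{ji}=-3$; $(T_i\boldsymbol\varpi)_i=1/\varpi_i(q_i^2u)$; $T_w=T_{i_1}\cdots T_{i_k}$ for a reduced expression. $\boldsymbol\alpha_{i,a}=(T_i\boldsymbol\omega_{i,a})^{-1}\boldsymbol\omega_{i,a}$; $\mathcal Q_q$ the subgroup generated by all $\boldsymbol\alpha_{i,a}$, $\mathcal Q_q^+$ the monoid generated by $1$ and them, $\mathcal Q_q^-=\{\boldsymbol\beta^{-1}:\boldsymbol\beta\in\mathcal Q_q^+\}$. *)

theory Defs
  imports Complex_Main "HOL-Computational_Algebra.Polynomial" "HOL-Computational_Algebra.Fraction_Field"
begin

text \<open>Rational functions in u over the complex numbers are modelled as the fraction
field of complex polynomials. The group A: rational functions with value 1 at u = 0.\<close>

type_synonym ratfun = "complex poly fract"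

definition ratA :: "ratfun set" where
  "ratA = {Fract p r | p r. poly r 0 \<noteq> 0 \<and> poly p 0 = poly r 0}"

definition rscale :: "complex \<Rightarrow> ratfun \<Rightarrow> ratfun" where
  "rscale c f = (SOME g. \<exists>p r. r \<noteq> 0 \<and> f = Fract p r \<and>
      g = Fract (pcompose p [:0, c:]) (pcompose r [:0, c:]))"

text \<open>Index set I = {1..n}. Tuples are functions nat => ratfun, equal to 1 outside I.\<close>

definition tmul :: "(nat \<Rightarrow> ratfun) \<Rightarrow> (nat \<Rightarrow> ratfun) \<Rightarrow> (nat \<Rightarrow> ratfun)" where
  "tmul x y = (\<lambda>i. x i * y i)"

definition tinv :: "(nat \<Rightarrow> ratfun) \<Rightarrow> (nat \<Rightarrow> ratfun)" where
  "tinv x = (\<lambda>i. inverse (x i))"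

definition tone :: "nat \<Rightarrow> ratfun" where
  "tone = (\<lambda>i. 1)"

definition Pq :: "nat \<Rightarrow> (nat \<Rightarrow> ratfun) set" where
  "Pq n = {x. (\<forall>i\<in>{1..n}. x i \<in> ratA) \<and> (\<forall>i. i \<notin> {1..n} \<longrightarrow> x i = 1)}"

definition omega :: "nat \<Rightarrow> complex \<Rightarrow> (nat \<Rightarrow> ratfun)" where
  "omega i a = (\<lambda>j. if j = i then Fract [:1, - a:] 1 else 1)"

inductive_set Pq_plus :: "nat \<Rightarrow> (nat \<Rightarrow> ratfun) set" for n where
  one: "tone \<in> Pq_plus n"
| gen: "i \<in> {1..n} \<Longrightarrow> a \<noteq> 0 \<Longrightarrow> omega i a \<in> Pq_plus n"
| mul: "x \<in> Pq_plus n \<Longrightarrow> y \<in> Pq_plus n \<Longrightarrow> tmul x y \<in> Pq_plus n"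

definition Pq_minus :: "nat \<Rightarrow> (nat \<Rightarrow> ratfun) set" where
  "Pq_minus n = {tinv b | b. b \<in> Pq_plus n}"

text \<open>Cartan matrix (a_ij) of a finite-dimensional complex simple Lie algebra, with the
standard symmetrizer d (positive integers, d_i a_ij = d_j a_ji, normalized so that
min d_i = 1): indecomposable, symmetrizable, positive definite generalized Cartan matrix.\<close>

definition simple_cartan :: "nat \<Rightarrow> (nat \<Rightarrow> nat \<Rightarrow> int) \<Rightarrow> (nat \<Rightarrow> nat) \<Rightarrow> bool" where
  "simple_cartan n A d \<longleftrightarrow>
     n \<ge> 1 \<and>
     (\<forall>i\<in>{1..n}. A i i = 2) \<and>
     (\<forall>i\<in>{1..n}. \<forall>j\<in>{1..n}. i \<noteq> j \<longrightarrow> A i j \<le> 0) \<and>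
     (\<forall>i\<in>{1..n}. \<forall>j\<in>{1..n}. A i j = 0 \<longleftrightarrow> A j i = 0) \<and>
     (\<forall>i\<in>{1..n}. d i > 0) \<and>
     (\<exists>i\<in>{1..n}. d i = 1) \<and>
     (\<forall>i\<in>{1..n}. \<forall>j\<in>{1..n}. int (d i) * A i j = int (d j) * A j i) \<and>
     (\<forall>x :: nat \<Rightarrow> real. (\<exists>i\<in>{1..n}. x i \<noteq> 0) \<longrightarrow>
         (\<Sum>i\<in>{1..n}. \<Sum>j\<in>{1..n}. x i * real (d i) * real_of_int (A i j) * x j) > 0) \<and>
     (\<forall>J. J \<subseteq> {1..n} \<and> J \<noteq> {} \<and> J \<noteq> {1..n} \<longrightarrow>
         (\<exists>i\<in>J. \<exists>j\<in>{1..n} - J. A i j \<noteq> 0))"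

text \<open>Weyl group: simple reflections acting on the root lattice (coordinates w.r.t. the
simple roots): s_i(alpha_j) = alpha_j - a_ij alpha_i.\<close>

definition srefl :: "nat \<Rightarrow> (nat \<Rightarrow> nat \<Rightarrow> int) \<Rightarrow> nat \<Rightarrow> (nat \<Rightarrow> int) \<Rightarrow> (nat \<Rightarrow> int)" where
  "srefl n A i v = (\<lambda>k. if k = i then v k - (\<Sum>j\<in>{1..n}. A i j * v j) else v k)"

fun weyl_word :: "nat \<Rightarrow> (nat \<Rightarrow> nat \<Rightarrow> int) \<Rightarrow> nat list \<Rightarrow> (nat \<Rightarrow> int) \<Rightarrow> (nat \<Rightarrow> int)" where
  "weyl_word n A [] = id"
| "weyl_word n A (i # is) = srefl n A i \<circ> weyl_word n A is"

definition reduced_word :: "nat \<Rightarrow> (nat \<Rightarrow> nat \<Rightarrow> int) \<Rightarrow> nat list \<Rightarrow> bool" where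
  "reduced_word n A w \<longleftrightarrow> set w \<subseteq> {1..n} \<and>
     (\<forall>w'. set w' \<subseteq> {1..n} \<and> weyl_word n A w' = weyl_word n A w \<longrightarrow> length w \<le> length w')"

definition Tbraid :: "nat \<Rightarrow> (nat \<Rightarrow> nat \<Rightarrow> int) \<Rightarrow> (nat \<Rightarrow> nat) \<Rightarrow> complex \<Rightarrow> nat
                      \<Rightarrow> (nat \<Rightarrow> ratfun) \<Rightarrow> (nat \<Rightarrow> ratfun)" where
  "Tbraid n A d q i x = (\<lambda>j.
     if j \<notin> {1..n} then x j
     else if j = i then inverse (rscale (q ^ (2 * d i)) (x i))
     else if A j i = 0 then x j
     else if A j i = -1 then x j * rscale (q ^ d i) (x i)
     else if A j i = -2 then x j * rscale (q ^ 3) (x i) * rscale q (x i)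
     else if A j i = -3 then x j * rscale (q ^ 5) (x i) * rscale (q ^ 3) (x i) * rscale q (x i)
     else x j)"

fun Tword :: "nat \<Rightarrow> (nat \<Rightarrow> nat \<Rightarrow> int) \<Rightarrow> (nat \<Rightarrow> nat) \<Rightarrow> complex \<Rightarrow> nat list
                \<Rightarrow> (nat \<Rightarrow> ratfun) \<Rightarrow> (nat \<Rightarrow> ratfun)" where
  "Tword n A d q [] x = x"
| "Tword n A d q (i # is) x = Tbraid n A d q i (Tword n A d q is x)"

definition alpha :: "nat \<Rightarrow> (nat \<Rightarrow> nat \<Rightarrow> int) \<Rightarrow> (nat \<Rightarrow> nat) \<Rightarrow> complex \<Rightarrow> nat \<Rightarrow> complex
                     \<Rightarrow> (nat \<Rightarrow> ratfun)" where
  "alpha n A d q i a = tmul (tinv (Tbraid n A d q i (omega i a))) (omega i a)"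

inductive_set Qq :: "nat \<Rightarrow> (nat \<Rightarrow> nat \<Rightarrow> int) \<Rightarrow> (nat \<Rightarrow> nat) \<Rightarrow> complex \<Rightarrow> (nat \<Rightarrow> ratfun) set"
  for n A d q where
  one: "tone \<in> Qq n A d q"
| gen: "i \<in> {1..n} \<Longrightarrow> a \<noteq> 0 \<Longrightarrow> alpha n A d q i a \<in> Qq n A d q"
| mul: "x \<in> Qq n A d q \<Longrightarrow> y \<in> Qq n A d q \<Longrightarrow> tmul x y \<in> Qq n A d q"
| inv: "x \<in> Qq n A d q \<Longrightarrow> tinv x \<in> Qq n A d q"

inductive_set Qq_plus :: "nat \<Rightarrow> (nat \<Rightarrow> nat \<Rightarrow> int) \<Rightarrow> (nat \<Rightarrow> nat) \<Rightarrow> complex \<Rightarrow> (nat \<Rightarrow> ratfun) set"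
  for n A d q where
  one: "tone \<in> Qq_plus n A d q"
| gen: "i \<in> {1..n} \<Longrightarrow> a \<noteq> 0 \<Longrightarrow> alpha n A d q i a \<in> Qq_plus n A d q"
| mul: "x \<in> Qq_plus n A d q \<Longrightarrow> y \<in> Qq_plus n A d q \<Longrightarrow> tmul x y \<in> Qq_plus n A d q"

definition Qq_minus :: "nat \<Rightarrow> (nat \<Rightarrow> nat \<Rightarrow> int) \<Rightarrow> (nat \<Rightarrow> nat) \<Rightarrow> complex \<Rightarrow> (nat \<Rightarrow> ratfun) set" where
  "Qq_minus n A d q = {tinv b | b. b \<in> Qq_plus n A d q}"

end

theory Submission
  imports Defs "Jordan_Normal_Form.Determinant" "HOL-Computational_Algebra.Fundamental_Theorem_Algebra"
begin

text \<open>
Each \<open>T\<^sub>i\<close> is multiplicative, and for a tuple \<open>y\<close> with nonzero entries the quotient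
\<open>y (T\<^sub>i y)\<^sup>-\<^sup>1\<close> depends only on \<open>f = y\<^sub>i\<close>, multiplicatively in \<open>f\<close>; for \<open>f = 1 - a u\<close> it is
\<open>\<alpha>\<^sub>i\<^sub>,\<^sub>a\<close>. By the fundamental theorem of algebra every element of \<open>\<A>\<close> is a product of
factors \<open>(1 - a u)\<^sup>\<plusminus>\<^sup>1\<close>, so telescoping along \<open>w\<close> puts \<open>\<varpi> (T\<^sub>w \<varpi>)\<^sup>-\<^sup>1\<close> into \<open>\<Q>\<^sub>q\<close>.

For \<open>\<Q>\<^sub>q\<^sup>+\<close> one needs that \<open>(T\<^sub>\<rho> \<varpi>)\<^sub>i\<close> is a product of factors \<open>1 - a u\<close> whenever
\<open>\<varpi> \<in> \<P>\<^sub>q\<^sup>+\<close> and \<open>i \<rho>\<close> is reduced. Write \<open>(T\<^sub>\<rho> \<varpi>)\<^sub>i = \<Prod>\<^sub>m \<varpi>\<^sub>m\<^bsup>p\<^sub>m\<^esup>\<close> with exponents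
\<open>p\<^sub>m \<in> \<int>[t]\<close> acting through \<open>t \<cdot> f(u) = f(q u)\<close>. The exponents are computed by a
\<open>t\<close>-deformation of the Weyl group action that specializes at \<open>t = 1\<close> to the action on weights,
and their nonnegativity is a deformed form of the positivity of the coroot \<open>\<rho>\<^sup>-\<^sup>1 \<alpha>\<^sub>i\<^sup>\<or>\<close>. It is
proved the same way: the deformed action satisfies the braid relations (checked in rank two),
so by Matsumoto's argument it depends only on the Weyl group element, and the parabolic
factorization of reduced words reduces positivity to explicit rank-two computations.
\<close>

definition simple_root :: "nat \<Rightarrow> nat \<Rightarrow> int" where
  "simple_root k = (\<lambda>l. if l = k then 1 else 0)"

locale simple_cartan_matrix =
  fixes n :: nat and A :: "nat \<Rightarrow> nat \<Rightarrow> int" and d :: "nat \<Rightarrow> nat"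
  assumes cartan: "simple_cartan n A d"
begin

abbreviation sref where "sref \<equiv> srefl n A"
abbreviation wword where "wword \<equiv> weyl_word n A"

lemma cartan_diag: "i \<in> {1..n} \<Longrightarrow> A i i = 2"
  using cartan unfolding simple_cartan_def by auto

lemma cartan_offdiag_nonpos: "i \<in> {1..n} \<Longrightarrow> j \<in> {1..n} \<Longrightarrow> i \<noteq> j \<Longrightarrow> A i j \<le> 0"
  using cartan unfolding simple_cartan_def by auto

lemma cartan_zero_iff: "i \<in> {1..n} \<Longrightarrow> j \<in> {1..n} \<Longrightarrow> A i j = 0 \<longleftrightarrow> A j i = 0"
  using cartan unfolding simple_cartan_def by auto

lemma d_pos: "i \<in> {1..n} \<Longrightarrow> d i > 0"
  using cartan unfolding simple_cartan_def by auto

lemma exists_d_eq_1: "\<exists>i\<in>{1..n}. d i = 1"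
  using cartan unfolding simple_cartan_def by (elim conjE) assumption

lemma d_symmetrizes: "i \<in> {1..n} \<Longrightarrow> j \<in> {1..n} \<Longrightarrow> int (d i) * A i j = int (d j) * A j i"
  using cartan unfolding simple_cartan_def by auto

lemma cartan_pos_def: "(\<exists>i\<in>{1..n}. x i \<noteq> 0) \<Longrightarrow>
   (\<Sum>i\<in>{1..n}. \<Sum>j\<in>{1..n}. x i * real (d i) * real_of_int (A i j) * x j) > 0"
  using cartan unfolding simple_cartan_def by blast

lemma cartan_indecomposable:
  "J \<subseteq> {1..n} \<Longrightarrow> J \<noteq> {} \<Longrightarrow> J \<noteq> {1..n} \<Longrightarrow> \<exists>i\<in>J. \<exists>j\<in>{1..n} - J. A i j \<noteq> 0"
  using cartan unfolding simple_cartan_def by blast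

section \<open>Words in the simple reflections and their length\<close>

lemma sref_eq: "sref i v = (\<lambda>k. v k - (if k = i then (\<Sum>j\<in>{1..n}. A i j * v j) else 0))"
  unfolding srefl_def by auto

lemma sref_sref: assumes i: "i \<in> {1..n}" shows "sref i (sref i v) = v"
proof -
  let ?S = "\<Sum>j\<in>{1..n}. A i j * v j"
  have "(\<Sum>j\<in>{1..n}. A i j * sref i v j) = (\<Sum>j\<in>{1..n}. A i j * v j - (if j = i then A i i * ?S else 0))"
    unfolding sref_eq by (rule sum.cong) (auto simp: algebra_simps)
  also have "\<dots> = - ?S" using i cartan_diag[OF i] by (simp add: sum_subtractf)
  finally show ?thesis unfolding sref_eq[of i "sref i v"] by (auto simp: sref_eq fun_eq_iff)
qed

lemma wword_lincomb:
  "wword \<rho> (\<lambda>k. a * u k + b * v k) = (\<lambda>k. a * wword \<rho> u k + b * wword \<rho> v k)"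
proof (induction \<rho>)
  case (Cons i \<rho>)
  show ?case by (simp add: Cons.IH sref_eq fun_eq_iff sum.distrib sum_distrib_left algebra_simps)
qed simp

lemma wword_neg: "wword \<rho> (\<lambda>k. - v k) = (\<lambda>k. - wword \<rho> v k)"
  using wword_lincomb[of \<rho> "-1" v 0 v] by simp

lemma wword_zero: "wword \<rho> (\<lambda>_. 0) = (\<lambda>_. 0)"
  using wword_lincomb[of \<rho> 0 "\<lambda>_. 0" 0 "\<lambda>_. 0"] by simp

lemma wword_append: "wword (\<rho> @ \<sigma>) = wword \<rho> \<circ> wword \<sigma>"
  by (induction \<rho>) auto

lemma wword_Cons_Cons: "i \<in> {1..n} \<Longrightarrow> wword (i # i # \<sigma>) = wword \<sigma>"
  using sref_sref by (auto simp: fun_eq_iff)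

lemma wword_rev_wword: "set \<rho> \<subseteq> {1..n} \<Longrightarrow> wword (rev \<rho>) (wword \<rho> v) = v"
  by (induction \<rho> arbitrary: v) (auto simp: wword_append sref_sref)

lemma wword_inj: "set \<rho> \<subseteq> {1..n} \<Longrightarrow> wword \<rho> u = wword \<rho> v \<Longrightarrow> u = v"
  by (metis wword_rev_wword)

lemma wword_nonzero: "set \<rho> \<subseteq> {1..n} \<Longrightarrow> v \<noteq> (\<lambda>_. 0) \<Longrightarrow> wword \<rho> v \<noteq> (\<lambda>_. 0)"
  using wword_inj wword_zero by metis

lemma wword_rev_cong:
  assumes "set \<rho> \<subseteq> {1..n}" "set \<sigma> \<subseteq> {1..n}" "wword \<rho> = wword \<sigma>"
  shows "wword (rev \<rho>) = wword (rev \<sigma>)"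
proof
  fix v
  have "wword \<sigma> (wword (rev \<rho>) v) = wword \<sigma> (wword (rev \<sigma>) v)"
    using assms wword_rev_wword[of "rev \<rho>"] wword_rev_wword[of "rev \<sigma>"] by simp
  then show "wword (rev \<rho>) v = wword (rev \<sigma>) v" using wword_inj assms(2) by blast
qed

lemma wword_Cons_cancel: "i \<in> {1..n} \<Longrightarrow> wword (i # \<rho>) = wword (i # \<sigma>) \<Longrightarrow> wword \<rho> = wword \<sigma>"
  by (metis comp_assoc weyl_word.simps(2) wword_Cons_Cons)

definition ell :: "nat list \<Rightarrow> nat" where
  "ell \<rho> = (LEAST k. \<exists>\<sigma>. set \<sigma> \<subseteq> {1..n} \<and> length \<sigma> = k \<and> wword \<sigma> = wword \<rho>)"

definition reduced :: "nat list \<Rightarrow> bool" where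
  "reduced \<rho> \<longleftrightarrow> set \<rho> \<subseteq> {1..n} \<and> ell \<rho> = length \<rho>"

lemma ell_le_length_of_eq: "set \<sigma> \<subseteq> {1..n} \<Longrightarrow> wword \<sigma> = wword \<rho> \<Longrightarrow> ell \<rho> \<le> length \<sigma>"
  unfolding ell_def by (rule Least_le) blast

lemma ell_le_length: "set \<rho> \<subseteq> {1..n} \<Longrightarrow> ell \<rho> \<le> length \<rho>"
  using ell_le_length_of_eq by blast

lemma ell_witness:
  assumes "set \<rho> \<subseteq> {1..n}"
  obtains \<sigma> where "set \<sigma> \<subseteq> {1..n}" "length \<sigma> = ell \<rho>" "wword \<sigma> = wword \<rho>"
proof -
  have "\<exists>\<sigma>. set \<sigma> \<subseteq> {1..n} \<and> length \<sigma> = ell \<rho> \<and> wword \<sigma> = wword \<rho>"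
    unfolding ell_def by (rule LeastI_ex) (use assms in blast)
  then show ?thesis using that by blast
qed

lemma ell_cong: "wword \<rho> = wword \<sigma> \<Longrightarrow> ell \<rho> = ell \<sigma>"
  unfolding ell_def by simp

lemma reduced_word_iff: "reduced_word n A w \<longleftrightarrow> reduced w"
proof
  assume h: "reduced_word n A w"
  then have s: "set w \<subseteq> {1..n}" unfolding reduced_word_def by blast
  obtain \<sigma> where "set \<sigma> \<subseteq> {1..n}" "length \<sigma> = ell w" "wword \<sigma> = wword w"
    using ell_witness[OF s] .
  then have "length w \<le> ell w" using h unfolding reduced_word_def by metis
  then show "reduced w" using ell_le_length[OF s] s unfolding reduced_def by simp
next
  assume "reduced w"
  then show "reduced_word n A w" unfolding reduced_def reduced_word_def using ell_le_length_of_eq by metis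
qed

lemma ell_append_le:
  assumes "set \<rho> \<subseteq> {1..n}" "set \<sigma> \<subseteq> {1..n}"
  shows "ell (\<rho> @ \<sigma>) \<le> ell \<rho> + ell \<sigma>"
proof -
  obtain \<rho>' where r: "set \<rho>' \<subseteq> {1..n}" "length \<rho>' = ell \<rho>" "wword \<rho>' = wword \<rho>"
    using ell_witness assms(1) .
  obtain \<sigma>' where s: "set \<sigma>' \<subseteq> {1..n}" "length \<sigma>' = ell \<sigma>" "wword \<sigma>' = wword \<sigma>"
    using ell_witness assms(2) .
  have "ell (\<rho> @ \<sigma>) \<le> length (\<rho>' @ \<sigma>')"
    by (rule ell_le_length_of_eq) (use r s in \<open>auto simp: wword_append\<close>)
  then show ?thesis using r s by simp
qed

lemma reduced_append:
  assumes "reduced (\<rho> @ \<sigma>)" shows "reduced \<rho>" "reduced \<sigma>"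
proof -
  have s: "set \<rho> \<subseteq> {1..n}" "set \<sigma> \<subseteq> {1..n}" using assms unfolding reduced_def by auto
  have "length \<rho> + length \<sigma> \<le> ell \<rho> + ell \<sigma>"
    using ell_append_le[OF s] assms unfolding reduced_def by simp
  then show "reduced \<rho>" "reduced \<sigma>"
    using ell_le_length[OF s(1)] ell_le_length[OF s(2)] s unfolding reduced_def by simp_all
qed

lemma reduced_ConsD: "reduced (i # \<rho>) \<Longrightarrow> reduced \<rho>"
  using reduced_append(2)[of "[i]" \<rho>] by simp

lemma not_reduced_Cons_Cons: "\<not> reduced (i # i # \<sigma>)"
proof
  assume r: "reduced (i # i # \<sigma>)"
  then have i: "i \<in> {1..n}" and s: "set \<sigma> \<subseteq> {1..n}" unfolding reduced_def by auto
  have "ell (i # i # \<sigma>) = ell \<sigma>" using wword_Cons_Cons[OF i] by (metis ell_cong)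
  then show False using r ell_le_length[OF s] unfolding reduced_def by simp
qed

end

context simple_cartan_matrix begin

definition wmatrix :: "((nat \<Rightarrow> int) \<Rightarrow> (nat \<Rightarrow> int)) \<Rightarrow> int mat" where
  "wmatrix x = mat n n (\<lambda>(r, c). x (simple_root (Suc c)) (Suc r))"

definition sref_matrix :: "nat \<Rightarrow> int mat" where
  "sref_matrix i = mat n n (\<lambda>(r, c). (if r = c then 1 else 0) - (if Suc r = i then A i (Suc c) else 0))"

lemma sum_shift_1: "(\<Sum>k\<in>{0..<n}. f (Suc k)) = (\<Sum>j\<in>{1..n}. f j)"
proof -
  have "(\<Sum>j\<in>{1..n}. f j) = (\<Sum>j\<in>{Suc 0..<Suc n}. f j)"
    by (rule sum.cong) auto
  also have "\<dots> = (\<Sum>k\<in>{0..<n}. f (Suc k))" by (rule sum.shift_bounds_Suc_ivl)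
  finally show ?thesis by simp
qed

lemma wmatrix_carrier: "wmatrix x \<in> carrier_mat n n"
  unfolding wmatrix_def by simp

lemma sref_matrix_carrier: "sref_matrix i \<in> carrier_mat n n"
  unfolding sref_matrix_def by simp

lemma wmatrix_sref: assumes i: "i \<in> {1..n}" shows "wmatrix (sref i \<circ> x) = sref_matrix i * wmatrix x"
proof (rule eq_matI)
  fix r c assume "r < dim_row (sref_matrix i * wmatrix x)" "c < dim_col (sref_matrix i * wmatrix x)"
  then have r: "r < n" and c: "c < n" by (auto simp: sref_matrix_def wmatrix_def)
  define v where "v = x (simple_root (Suc c))"
  have "(sref_matrix i * wmatrix x) $$ (r, c)
      = (\<Sum>k\<in>{0..<n}. ((if r = k then 1 else 0) - (if Suc r = i then A i (Suc k) else 0)) * v (Suc k))"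
    using r c by (simp add: sref_matrix_def wmatrix_def scalar_prod_def v_def)
  also have "\<dots> = (\<Sum>k\<in>{0..<n}. (if r = k then v (Suc k) else 0) - (if Suc r = i then A i (Suc k) * v (Suc k) else 0))"
    by (rule sum.cong) (auto simp: algebra_simps)
  also have "\<dots> = v (Suc r) - (if Suc r = i then (\<Sum>k\<in>{0..<n}. A i (Suc k) * v (Suc k)) else 0)"
    using r by (simp add: sum_subtractf)
  also have "\<dots> = wmatrix (sref i \<circ> x) $$ (r, c)"
    using r c sum_shift_1[of "\<lambda>j. A i j * v j"] by (simp add: wmatrix_def sref_eq v_def)
  finally show "wmatrix (sref i \<circ> x) $$ (r, c) = (sref_matrix i * wmatrix x) $$ (r, c)" by simp
qed (auto simp: wmatrix_def sref_matrix_def)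

lemma wmatrix_id: "wmatrix id = 1\<^sub>m n"
  by (rule eq_matI) (auto simp: wmatrix_def simple_root_def)

text \<open>The parity of lengths comes from the sign character \<open>det\<close>. The matrix of \<open>s\<^sub>i\<close> differs
  from the identity only in row \<open>i\<close>, so no permutation other than the identity contributes
  to its determinant.\<close>

lemma det_sref_matrix: assumes i: "i \<in> {1..n}" shows "det (sref_matrix i) = -1"
proof -
  let ?U = "{0..<n}"
  let ?f = "\<lambda>p. signof p * (\<Prod>k = 0..<n. sref_matrix i $$ (k, p k))"
  have r: "i - 1 < n" "Suc (i - 1) = i" using i by auto
  have "det (sref_matrix i) = sum ?f {p. p permutes ?U}"
    by (rule det_def') (rule sref_matrix_carrier)
  also have "\<dots> = ?f id + sum ?f ({p. p permutes ?U} - {id})"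
    by (rule sum.remove) (auto simp: finite_permutations permutes_id)
  also have "sum ?f ({p. p permutes ?U} - {id}) = 0"
  proof (rule sum.neutral, intro ballI)
    fix p assume "p \<in> {p. p permutes ?U} - {id}"
    then have p: "p permutes ?U" and nid: "p \<noteq> id" by auto
    obtain k where k: "p k \<noteq> k" using nid by (auto simp: fun_eq_iff)
    have kU: "k < n" using p k by (meson atLeastLessThan_iff permutes_not_in zero_le)
    have "\<exists>k'. k' < n \<and> p k' \<noteq> k' \<and> k' \<noteq> i - 1"
    proof (cases "k = i - 1")
      case True
      have "p (p k) \<noteq> p k" using permutes_inj[OF p] k by (metis injD)
      moreover have "p k < n" using p kU by (simp add: permutes_in_image)
      ultimately show ?thesis using True k by blast
    qed (use k kU in blast)
    then obtain k' where k': "k' < n" "p k' \<noteq> k'" "k' \<noteq> i - 1" by blast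
    have "sref_matrix i $$ (k', p k') = 0"
      using k' r p by (auto simp: sref_matrix_def permutes_in_image)
    then have "(\<Prod>k = 0..<n. sref_matrix i $$ (k, p k)) = 0"
      using k' by (intro prod_zero) auto
    then show "?f p = 0" by simp
  qed
  also have "(\<Prod>k = 0..<n. sref_matrix i $$ (k, id k)) = (\<Prod>k = 0..<n. if k = i - 1 then -1 else 1)"
    by (rule prod.cong) (use r cartan_diag[OF i] in \<open>auto simp: sref_matrix_def\<close>)
  also have "\<dots> = -1" using r by (simp add: prod.If_cases)
  finally show ?thesis by (simp add: signof_id)
qed

lemma det_wmatrix: "set \<rho> \<subseteq> {1..n} \<Longrightarrow> det (wmatrix (wword \<rho>)) = (-1) ^ length \<rho>"
proof (induction \<rho>)
  case Nil
  then show ?case using wmatrix_id by (simp add: id_def)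
next
  case (Cons a \<rho>)
  have a: "a \<in> {1..n}" using Cons by simp
  have "det (wmatrix (wword (a # \<rho>))) = det (sref_matrix a) * det (wmatrix (wword \<rho>))"
    using wmatrix_sref[OF a, of "wword \<rho>"] det_mult[OF sref_matrix_carrier wmatrix_carrier]
    by (simp add: comp_def)
  then show ?case using Cons det_sref_matrix[OF a] by (simp add: comp_def)
qed

lemma wword_length_parity:
  assumes "set \<rho> \<subseteq> {1..n}" "set \<sigma> \<subseteq> {1..n}" "wword \<rho> = wword \<sigma>"
  shows "even (length \<rho> + length \<sigma>)"
proof -
  have "(-1::int) ^ length \<rho> = (-1) ^ length \<sigma>" using det_wmatrix assms by metis
  then have "even (length \<rho>) = even (length \<sigma>)"
    by (metis neg_one_even_power neg_one_odd_power one_neq_neg_one)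
  then show ?thesis by auto
qed

lemma ell_Cons:
  assumes a: "a \<in> {1..n}" and s: "set \<rho> \<subseteq> {1..n}"
  shows "ell (a # \<rho>) = ell \<rho> + 1 \<or> ell \<rho> = ell (a # \<rho>) + 1"
proof -
  have le1: "ell (a # \<rho>) \<le> ell \<rho> + 1"
    using ell_append_le[of "[a]" \<rho>] ell_le_length[of "[a]"] a s by simp
  have "ell \<rho> = ell (a # (a # \<rho>))" using wword_Cons_Cons[OF a] by (metis ell_cong)
  also have "\<dots> \<le> ell (a # \<rho>) + 1"
    using ell_append_le[of "[a]" "a # \<rho>"] ell_le_length[of "[a]"] a s by simp
  finally have le2: "ell \<rho> \<le> ell (a # \<rho>) + 1" .
  obtain \<sigma> where \<sigma>: "set \<sigma> \<subseteq> {1..n}" "length \<sigma> = ell \<rho>" "wword \<sigma> = wword \<rho>"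
    using ell_witness[OF s] .
  obtain \<tau> where \<tau>: "set \<tau> \<subseteq> {1..n}" "length \<tau> = ell (a # \<rho>)" "wword \<tau> = wword (a # \<rho>)"
    using ell_witness[of "a # \<rho>"] a s by auto
  have "even (length (a # \<sigma>) + length \<tau>)"
    using wword_length_parity[of "a # \<sigma>" \<tau>] \<sigma> \<tau> a by simp
  then have "even (ell \<rho> + 1 + ell (a # \<rho>))" using \<sigma> \<tau> by simp
  moreover have "\<And>x y::nat. even (x + 1 + y) \<Longrightarrow> y \<le> x + 1 \<Longrightarrow> x \<le> y + 1 \<Longrightarrow> y = x + 1 \<or> x = y + 1"
    by presburger
  ultimately show ?thesis using le1 le2 by blast
qed

end

section \<open>Rank two\<close>

fun alt_word :: "nat \<Rightarrow> nat \<Rightarrow> nat \<Rightarrow> nat list" where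
  "alt_word a b 0 = []"
| "alt_word a b (Suc k) = a # alt_word b a k"

lemma alt_word_length [simp]: "length (alt_word a b k) = k"
  by (induction k arbitrary: a b) auto

lemma alt_word_set: "set (alt_word a b k) \<subseteq> {a, b}"
  by (induction k arbitrary: a b) auto

lemma alt_word_snoc: "alt_word a b (Suc k) = alt_word a b k @ [if even k then a else b]"
  by (induction k arbitrary: a b) auto

lemma rev_alt_word: "rev (alt_word a b k) = (if odd k then alt_word a b k else alt_word b a k)"
proof (induction k arbitrary: a b)
  case (Suc k)
  have "rev (alt_word a b (Suc k)) = (if odd k then alt_word b a k else alt_word a b k) @ [a]"
    using Suc by simp
  also have "\<dots> = (if odd (Suc k) then alt_word a b (Suc k) else alt_word b a (Suc k))"
    using alt_word_snoc[of a b k] alt_word_snoc[of b a k] by auto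
  finally show ?case .
qed simp

lemma alt_word_prefix: "p \<le> k \<Longrightarrow> \<exists>r. alt_word a b k = alt_word a b p @ r"
proof (induction p arbitrary: a b k)
  case (Suc p)
  then obtain k' where k: "k = Suc k'" by (cases k) auto
  then obtain r where "alt_word b a k' = alt_word b a p @ r" using Suc by fastforce
  then show ?case using k by simp
qed simp

text \<open>The pairs \<open>(a\<^sub>i\<^sub>j, a\<^sub>j\<^sub>i)\<close> of finite type and the orders \<open>m\<^sub>i\<^sub>j\<close> of \<open>s\<^sub>i s\<^sub>j\<close>, as functions
  of \<open>a\<^sub>i\<^sub>j a\<^sub>j\<^sub>i\<close>.\<close>

definition rank2_pair :: "int \<Rightarrow> int \<Rightarrow> bool" where
  "rank2_pair p q \<longleftrightarrow> (p, q) \<in> {(0, 0), (-1, -1), (-1, -2), (-2, -1), (-1, -3), (-3, -1)}"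

definition coxeter_entry :: "int \<Rightarrow> nat" where
  "coxeter_entry c = (if c = 0 then 2 else if c = 1 then 3 else if c = 2 then 4 else 6)"

text \<open>The coordinates \<open>(x, y)\<close> at \<open>a, b\<close> of \<open>s\<^sub>a s\<^sub>b s\<^sub>a \<dots> v\<close> (\<open>k\<close> factors, starting with \<open>s\<^sub>a\<close> if
  \<open>f\<close> holds and with \<open>s\<^sub>b\<close> otherwise), where \<open>p = a\<^sub>a\<^sub>b\<close>, \<open>q = a\<^sub>b\<^sub>a\<close> and \<open>P\<^sub>a\<close>, \<open>P\<^sub>b\<close> are the
  contributions of the other coordinates, which these reflections do not change.\<close>

fun rank2_iter :: "int \<Rightarrow> int \<Rightarrow> int \<Rightarrow> int \<Rightarrow> bool \<Rightarrow> nat \<Rightarrow> int \<times> int \<Rightarrow> int \<times> int" where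
  "rank2_iter p q Pa Pb f 0 s = s"
| "rank2_iter p q Pa Pb True (Suc k) s =
     (case rank2_iter p q Pa Pb False k s of (x, y) \<Rightarrow> (- x - p * y - Pa, y))"
| "rank2_iter p q Pa Pb False (Suc k) s =
     (case rank2_iter p q Pa Pb True k s of (x, y) \<Rightarrow> (x, - y - q * x - Pb))"

lemma rank2_iter_braid:
  assumes "rank2_pair p q"
  shows "rank2_iter p q Pa Pb True (coxeter_entry (p * q)) s = rank2_iter p q Pa Pb False (coxeter_entry (p * q)) s"
  using assms by (cases s) (auto simp: rank2_pair_def coxeter_entry_def eval_nat_numeral algebra_simps)

lemma rank2_iter_nonneg:
  assumes "rank2_pair p q" and "L < coxeter_entry (p * q)"
  shows "fst (rank2_iter p q 0 0 (even L) L (1, 0)) \<ge> 0 \<and> snd (rank2_iter p q 0 0 (even L) L (1, 0)) \<ge> 0"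
proof -
  have "L \<in> {0, 1, 2, 3, 4, 5}" using assms(2) by (auto simp: coxeter_entry_def split: if_splits)
  then show ?thesis using assms
    by (auto simp: rank2_pair_def coxeter_entry_def) (simp_all add: eval_nat_numeral)
qed

context simple_cartan_matrix begin

lemma sum_two_terms:
  assumes "a \<in> {1..n}" "b \<in> {1..n}" "a \<noteq> b" "\<And>k. k \<in> {1..n} \<Longrightarrow> k \<noteq> a \<Longrightarrow> k \<noteq> b \<Longrightarrow> f k = 0"
  shows "(\<Sum>k\<in>{1..n}. f k) = f a + f b"
proof -
  have "(\<Sum>k\<in>{1..n}. f k) = (\<Sum>k\<in>{a,b}. f k)"
    by (rule sum.mono_neutral_right) (use assms in auto)
  then show ?thesis using assms by simp
qed

text \<open>Positive definiteness, tested on \<open>2 \<alpha>\<^sub>a - a\<^sub>b\<^sub>a \<alpha>\<^sub>b\<close>.\<close>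

lemma cartan_prod_le_3:
  assumes a: "a \<in> {1..n}" and b: "b \<in> {1..n}" and ab: "a \<noteq> b"
  shows "A a b * A b a \<le> 3"
proof (rule ccontr)
  assume "\<not> A a b * A b a \<le> 3"
  then have big: "A a b * A b a \<ge> 4" by simp
  then have "A a b \<noteq> 0" "A b a \<noteq> 0" by auto
  then have le: "A a b < 0" "A b a < 0"
    using cartan_offdiag_nonpos[OF a b ab] cartan_offdiag_nonpos[OF b a] ab by force+
  define r where "r = - real_of_int (A b a)"
  define s where "s = - real_of_int (A a b)"
  define da where "da = real (d a)"
  define db where "db = real (d b)"
  have rpos: "r > 0" and spos: "s > 0" using le by (auto simp: r_def s_def)
  have dbpos: "db > 0" using d_pos[OF b] by (simp add: db_def)
  have rel: "da * s = db * r"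
    using arg_cong[OF d_symmetrizes[OF a b], of real_of_int] by (simp add: da_def db_def r_def s_def)
  have rs: "r * s \<ge> 4" using big
    by (simp add: r_def s_def) (metis of_int_le_iff of_int_mult of_int_numeral mult.commute)
  define x where "x = (\<lambda>k. if k = a then 2 else if k = b then r else (0::real))"
  have "(\<Sum>i\<in>{1..n}. \<Sum>j\<in>{1..n}. x i * real (d i) * real_of_int (A i j) * x j) > 0"
    by (rule cartan_pos_def) (use a in \<open>auto simp: x_def\<close>)
  moreover have "(\<Sum>i\<in>{1..n}. \<Sum>j\<in>{1..n}. x i * real (d i) * real_of_int (A i j) * x j)
      = (\<Sum>i\<in>{1..n}. x i * real (d i) * real_of_int (A i a) * x a + x i * real (d i) * real_of_int (A i b) * x b)"
    by (rule sum.cong[OF refl], rule sum_two_terms[OF a b ab]) (auto simp: x_def)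
  moreover have "\<dots> = (x a * real (d a) * real_of_int (A a a) * x a + x a * real (d a) * real_of_int (A a b) * x b)
        + (x b * real (d b) * real_of_int (A b a) * x a + x b * real (d b) * real_of_int (A b b) * x b)"
    by (rule sum_two_terms[OF a b ab]) (auto simp: x_def)
  moreover have "\<dots> = 8 * da - 2 * s * r * da"
    using cartan_diag[OF a] cartan_diag[OF b] ab by (simp add: x_def da_def db_def r_def s_def algebra_simps)
  ultimately have pos: "8 * da - 2 * s * r * da > 0" by simp
  have "(8 * da - 2 * s * r * da) * s = 2 * db * r * (4 - r * s)"
    using rel by (simp add: algebra_simps) (metis mult.assoc mult.commute)
  also have "\<dots> \<le> 0" using dbpos rpos rs by (simp add: mult_nonneg_nonpos)
  finally show False using pos spos by (simp add: mult_le_0_iff)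
qed

lemma cartan_rank2_cases:
  assumes a: "a \<in> {1..n}" and b: "b \<in> {1..n}" and ab: "a \<noteq> b"
  shows "rank2_pair (A a b) (A b a)"
proof (cases "A a b = 0")
  case True then show ?thesis using cartan_zero_iff[OF a b] by (simp add: rank2_pair_def)
next
  case False
  then have nz: "A b a \<noteq> 0" using cartan_zero_iff[OF a b] by simp
  have l1: "A a b \<le> -1" using cartan_offdiag_nonpos[OF a b ab] False by simp
  have l2: "A b a \<le> -1" using cartan_offdiag_nonpos[OF b a] ab nz by force
  have p: "A a b * A b a \<le> 3" by (rule cartan_prod_le_3[OF a b ab])
  have "(- A a b) * (- A b a) \<ge> (- A a b) * 1" "(- A b a) * (- A a b) \<ge> (- A b a) * 1"
    using l1 l2 by (intro mult_left_mono; simp)+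
  then have "A a b \<in> {-3, -2, -1}" "A b a \<in> {-3, -2, -1}" using l1 l2 p by (auto simp: mult.commute)
  then show ?thesis using p by (auto simp: rank2_pair_def)
qed

definition braid_order :: "nat \<Rightarrow> nat \<Rightarrow> nat" where
  "braid_order a b = coxeter_entry (A a b * A b a)"

lemma braid_order_sym: "braid_order a b = braid_order b a"
  unfolding braid_order_def by (simp add: mult.commute)

lemma braid_order_ge_1: "braid_order a b \<ge> 1"
  unfolding braid_order_def coxeter_entry_def by simp

definition outer_sum :: "nat \<Rightarrow> nat \<Rightarrow> (nat \<Rightarrow> int) \<Rightarrow> int" where
  "outer_sum a b v = (\<Sum>j\<in>{1..n} - {a, b}. A a j * v j)"

lemma outer_sum_cong: "(\<And>k. k \<noteq> a \<Longrightarrow> k \<noteq> b \<Longrightarrow> v k = w k) \<Longrightarrow> outer_sum a b v = outer_sum a b w"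
  unfolding outer_sum_def by (rule sum.cong) auto

lemma outer_sum_simple_root: "c \<in> {a, b} \<Longrightarrow> outer_sum a b (simple_root c) = 0"
  unfolding outer_sum_def simple_root_def by (rule sum.neutral) auto

lemma sref_pair:
  assumes a: "a \<in> {1..n}" and b: "b \<in> {1..n}" and ab: "a \<noteq> b"
  shows "sref a v = (\<lambda>k. if k = a then - v a - A a b * v b - outer_sum a b v else v k)"
proof -
  have "(\<Sum>j\<in>{1..n}. A a j * v j) = outer_sum a b v + (\<Sum>j\<in>{a,b}. A a j * v j)"
    unfolding outer_sum_def by (rule sum.subset_diff) (use a b in auto)
  also have "(\<Sum>j\<in>{a,b}. A a j * v j) = 2 * v a + A a b * v b" using ab cartan_diag[OF a] by simp
  finally show ?thesis unfolding srefl_def by (auto simp: fun_eq_iff)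
qed

definition rank2_coords :: "nat \<Rightarrow> nat \<Rightarrow> (nat \<Rightarrow> int) \<Rightarrow> bool \<Rightarrow> nat \<Rightarrow> int \<times> int" where
  "rank2_coords a b v f k = rank2_iter (A a b) (A b a) (outer_sum a b v) (outer_sum b a v) f k (v a, v b)"

lemma wword_alt_word:
  assumes a: "a \<in> {1..n}" and b: "b \<in> {1..n}" and ab: "a \<noteq> b"
  shows "wword (if f then alt_word a b k else alt_word b a k) v
       = (\<lambda>l. if l = a then fst (rank2_coords a b v f k) else if l = b then snd (rank2_coords a b v f k) else v l)"
proof (induction k arbitrary: f)
  case (Suc k)
  define w where "w = wword (if f then alt_word b a k else alt_word a b k) v"
  have w: "w = (\<lambda>l. if l = a then fst (rank2_coords a b v (\<not> f) k)
      else if l = b then snd (rank2_coords a b v (\<not> f) k) else v l)"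
    using Suc.IH[of "\<not> f"] by (cases f) (simp_all add: w_def)
  have P: "outer_sum a b w = outer_sum a b v" "outer_sum b a w = outer_sum b a v"
    by (rule outer_sum_cong, simp add: w)+
  show ?case
  proof (cases f)
    case True
    have "wword (alt_word a b (Suc k)) v = sref a w" using True by (simp add: w_def)
    then show ?thesis using True P ab
      by (auto simp: sref_pair[OF a b ab] rank2_coords_def fun_eq_iff w split: prod.splits)
  next
    case False
    have "wword (alt_word b a (Suc k)) v = sref b w" using False by (simp add: w_def)
    then show ?thesis using False P ab
      by (auto simp: sref_pair[OF b a ab[symmetric]] rank2_coords_def fun_eq_iff w split: prod.splits)
  qed
qed (auto simp: rank2_coords_def fun_eq_iff)

lemma wword_braid:
  assumes a: "a \<in> {1..n}" and b: "b \<in> {1..n}" and ab: "a \<noteq> b"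
  shows "wword (alt_word a b (braid_order a b)) = wword (alt_word b a (braid_order a b))"
proof
  fix v
  have braid: "rank2_coords a b v True (braid_order a b) = rank2_coords a b v False (braid_order a b)"
    unfolding rank2_coords_def braid_order_def by (rule rank2_iter_braid[OF cartan_rank2_cases[OF a b ab]])
  show "wword (alt_word a b (braid_order a b)) v = wword (alt_word b a (braid_order a b)) v"
    using wword_alt_word[OF a b ab, of True "braid_order a b" v] wword_alt_word[OF a b ab, of False "braid_order a b" v]
    unfolding braid by simp
qed

lemma rank2_root_nonneg:
  assumes a: "a \<in> {1..n}" and b: "b \<in> {1..n}" and ab: "a \<noteq> b" and L: "L < braid_order a b"
  obtains c c' where "c \<ge> 0" "c' \<ge> 0"
    "wword (rev (alt_word b a L)) (simple_root a) = (\<lambda>k. c * simple_root a k + c' * simple_root b k)"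
proof -
  let ?R = "rank2_iter (A a b) (A b a) 0 0 (even L) L (1, 0)"
  have "rank2_coords a b (simple_root a) (even L) L = ?R"
    using ab outer_sum_simple_root[of a] outer_sum_simple_root[of a b a]
    by (simp add: rank2_coords_def simple_root_def)
  then have "wword (rev (alt_word b a L)) (simple_root a) = (\<lambda>k. fst ?R * simple_root a k + snd ?R * simple_root b k)"
    using wword_alt_word[OF a b ab, of "even L" L "simple_root a"] ab
    by (auto simp: rev_alt_word fun_eq_iff simple_root_def)
  moreover have "fst ?R \<ge> 0 \<and> snd ?R \<ge> 0"
    using rank2_iter_nonneg[OF cartan_rank2_cases[OF a b ab]] L by (simp add: braid_order_def)
  ultimately show ?thesis using that by blast
qed

end

section \<open>Positivity of roots\<close>

definition positive :: "(nat \<Rightarrow> int) \<Rightarrow> bool" where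
  "positive v \<longleftrightarrow> (\<forall>k. 0 \<le> v k) \<and> (\<exists>k. v k \<noteq> 0)"

lemma positiveI: "(\<And>k. 0 \<le> v k) \<Longrightarrow> v \<noteq> (\<lambda>_. 0) \<Longrightarrow> positive v"
  unfolding positive_def by (auto simp: fun_eq_iff)

lemma positive_simple_root: "positive (simple_root i)"
  unfolding positive_def simple_root_def by auto

lemma simple_root_nonzero: "simple_root i \<noteq> (\<lambda>_. 0)"
  by (auto simp: simple_root_def fun_eq_iff)

lemma not_positive_uminus: "positive v \<Longrightarrow> \<not> positive (\<lambda>k. - v k)"
  unfolding positive_def by (metis add.inverse_neutral antisym neg_0_le_iff_le)

context simple_cartan_matrix begin

lemma sref_simple_root: assumes a: "a \<in> {1..n}" shows "sref a (simple_root a) = (\<lambda>k. - simple_root a k)"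
proof -
  have "(\<Sum>j\<in>{1..n}. A a j * simple_root a j) = A a a"
    using a by (simp add: simple_root_def if_distrib cong: if_cong)
  then show ?thesis using cartan_diag[OF a] unfolding sref_eq by (auto simp: fun_eq_iff simple_root_def)
qed

lemma positive_lincomb:
  assumes "set \<tau> \<subseteq> {1..n}" "positive (wword \<tau> (simple_root a))" "positive (wword \<tau> (simple_root b))"
    "c \<ge> 0" "c' \<ge> 0" "(\<lambda>k. c * simple_root a k + c' * simple_root b k) \<noteq> (\<lambda>_. 0)"
  shows "positive (wword \<tau> (\<lambda>k. c * simple_root a k + c' * simple_root b k))"
proof (rule positiveI)
  fix k show "0 \<le> wword \<tau> (\<lambda>k. c * simple_root a k + c' * simple_root b k) k"
    using assms unfolding wword_lincomb positive_def by simp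
qed (use wword_nonzero assms in blast)

lemma descent_of_reduced:
  assumes "reduced (j # \<sigma>)" "set \<rho> \<subseteq> {1..n}" "wword (j # \<sigma>) = wword \<rho>"
  shows "ell (j # \<rho>) < ell \<rho>"
proof -
  have j: "j \<in> {1..n}" and s: "set \<sigma> \<subseteq> {1..n}" using assms(1) unfolding reduced_def by auto
  have "wword (j # \<rho>) = wword \<sigma>" using assms(3) wword_Cons_Cons[OF j, of \<sigma>] by (metis comp_assoc weyl_word.simps(2))
  then have "ell (j # \<rho>) \<le> length \<sigma>" using ell_le_length_of_eq[OF s] by metis
  then show ?thesis using assms ell_cong[OF assms(3)] unfolding reduced_def by simp
qed

lemma reduced_two_letters:
  assumes "set \<mu> \<subseteq> {a, b}" "a \<noteq> b" "reduced \<mu>"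
  shows "\<mu> = alt_word a b (length \<mu>) \<or> \<mu> = alt_word b a (length \<mu>)"
  using assms
proof (induction \<mu>)
  case (Cons x \<mu>)
  have IH: "\<mu> = alt_word a b (length \<mu>) \<or> \<mu> = alt_word b a (length \<mu>)"
    using Cons reduced_ConsD by simp
  show ?case
  proof (cases \<mu>)
    case (Cons y \<mu>')
    have xy: "x \<noteq> y" using not_reduced_Cons_Cons Cons Cons.prems(3) by blast
    have "x = a \<or> x = b" using Cons.prems by auto
    then show ?thesis
    proof
      assume xa: "x = a"
      then have "\<mu> = alt_word b a (length \<mu>)" using IH xy Cons by auto
      then show ?thesis using xa by (metis alt_word.simps(2) length_Cons)
    next
      assume xb: "x = b"
      then have "\<mu> = alt_word a b (length \<mu>)" using IH xy Cons by auto
      then show ?thesis using xb by (metis alt_word.simps(2) length_Cons)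
    qed
  qed (use Cons.prems in auto)
qed simp

text \<open>Take the factor \<open>\<tau>\<close> outside the parabolic subgroup generated by \<open>s\<^sub>a, s\<^sub>b\<close> as short as
  possible.\<close>

lemma parabolic_factorization:
  assumes a: "a \<in> {1..n}" and b: "b \<in> {1..n}" and s: "set \<rho> \<subseteq> {1..n}"
  obtains \<mu> \<tau> where "set \<mu> \<subseteq> {a, b}" "set \<tau> \<subseteq> {1..n}" "wword (\<mu> @ \<tau>) = wword \<rho>"
    "length \<mu> + length \<tau> = ell \<rho>" "reduced (\<mu> @ \<tau>)" "ell \<tau> < ell (a # \<tau>)" "ell \<tau> < ell (b # \<tau>)"
proof -
  define Q where "Q \<mu> \<tau> \<longleftrightarrow> set \<mu> \<subseteq> {a, b} \<and> set \<tau> \<subseteq> {1..n} \<and> wword (\<mu> @ \<tau>) = wword \<rho>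
    \<and> length \<mu> + length \<tau> = ell \<rho>" for \<mu> \<tau>
  obtain \<sigma> where \<sigma>: "set \<sigma> \<subseteq> {1..n}" "length \<sigma> = ell \<rho>" "wword \<sigma> = wword \<rho>"
    using ell_witness[OF s] .
  have ex: "\<exists>k \<mu> \<tau>. Q \<mu> \<tau> \<and> length \<tau> = k"
    using \<sigma> unfolding Q_def by (intro exI[of _ "length \<sigma>"] exI[of _ "[]"] exI[of _ \<sigma>]) auto
  define k where "k = (LEAST k. \<exists>\<mu> \<tau>. Q \<mu> \<tau> \<and> length \<tau> = k)"
  obtain \<mu> \<tau> where Q: "Q \<mu> \<tau>" and k\<tau>: "length \<tau> = k" using LeastI_ex[OF ex] unfolding k_def by blast
  have min: "length \<tau> \<le> length \<tau>'" if "Q \<mu>' \<tau>'" for \<mu>' \<tau>'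
    unfolding k\<tau> k_def by (rule Least_le) (use that in blast)
  have sm: "set \<mu> \<subseteq> {1..n}" and st: "set \<tau> \<subseteq> {1..n}" using Q a b unfolding Q_def by auto
  have "ell \<rho> = ell (\<mu> @ \<tau>)" using Q unfolding Q_def by (metis ell_cong)
  then have red: "reduced (\<mu> @ \<tau>)" using Q sm st unfolding Q_def reduced_def by auto
  then have red\<tau>: "ell \<tau> = length \<tau>" using reduced_append(2) unfolding reduced_def by blast
  have "ell \<tau> < ell (c # \<tau>)" if c: "c \<in> {a, b}" for c
  proof (rule ccontr)
    have cI: "c \<in> {1..n}" using c a b by auto
    assume "\<not> ell \<tau> < ell (c # \<tau>)"
    then have e: "ell \<tau> = ell (c # \<tau>) + 1" using ell_Cons[OF cI st] by auto
    obtain \<tau>' where \<tau>': "set \<tau>' \<subseteq> {1..n}" "length \<tau>' = ell (c # \<tau>)" "wword \<tau>' = wword (c # \<tau>)"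
      using ell_witness[of "c # \<tau>"] cI st by auto
    have "wword ((\<mu> @ [c]) @ \<tau>') v = wword (\<mu> @ \<tau>) v" for v
      using \<tau>'(3) sref_sref[OF cI] by (simp add: wword_append)
    then have "wword ((\<mu> @ [c]) @ \<tau>') = wword (\<mu> @ \<tau>)" by blast
    then have "Q (\<mu> @ [c]) \<tau>'" using Q \<tau>' c e red\<tau> unfolding Q_def by auto
    then have "length \<tau> \<le> length \<tau>'" by (rule min)
    then show False using e red\<tau> \<tau>' by simp
  qed
  then show ?thesis using that Q red unfolding Q_def by blast
qed

lemma reduced_alt_word_le:
  assumes a: "a \<in> {1..n}" and b: "b \<in> {1..n}" and ab: "a \<noteq> b" and r: "reduced (alt_word a b k)"
  shows "k \<le> braid_order a b"
proof (rule ccontr)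
  let ?m = "braid_order a b"
  assume "\<not> k \<le> ?m"
  then have "Suc ?m \<le> k" by simp
  then obtain t where "alt_word a b k = alt_word a b (Suc ?m) @ t" using alt_word_prefix by blast
  then have r2: "reduced (alt_word a b (Suc ?m))" using reduced_append(1) r by metis
  obtain m' where m': "?m = Suc m'" using braid_order_ge_1[of a b] by (cases ?m) auto
  have "wword (alt_word a b (Suc ?m)) = sref a \<circ> wword (alt_word b a ?m)" by (simp add: fun_eq_iff)
  also have "wword (alt_word b a ?m) = wword (alt_word a b ?m)" using wword_braid[OF a b ab] by simp
  also have "sref a \<circ> wword (alt_word a b ?m) = wword (alt_word b a m')"
    using m' sref_sref[OF a] by (simp add: fun_eq_iff)
  finally have "ell (alt_word a b (Suc ?m)) = ell (alt_word b a m')" by (rule ell_cong)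
  also have "\<dots> \<le> m'"
  proof -
    have "set (alt_word b a m') \<subseteq> {1..n}" using alt_word_set[of b a m'] a b by blast
    then show ?thesis using ell_le_length[of "alt_word b a m'"] by simp
  qed
  finally have "ell (alt_word a b (Suc ?m)) \<le> m'" .
  then show False using r2 m' unfolding reduced_def by simp
qed

lemma ascent_descent_factorization:
  assumes i: "i \<in> {1..n}" and j: "j \<in> {1..n}" and ij: "i \<noteq> j" and s: "set \<rho> \<subseteq> {1..n}"
    and up: "ell \<rho> < ell (i # \<rho>)" and down: "ell (j # \<rho>) < ell \<rho>"
  obtains L \<tau> where "1 \<le> L" "L < braid_order i j" "set \<tau> \<subseteq> {1..n}" "wword (alt_word j i L @ \<tau>) = wword \<rho>"
    "L + length \<tau> = ell \<rho>" "reduced \<tau>" "ell \<tau> < ell (i # \<tau>)" "ell \<tau> < ell (j # \<tau>)"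
proof -
  obtain \<mu> \<tau> where D: "set \<mu> \<subseteq> {i, j}" "set \<tau> \<subseteq> {1..n}" "wword (\<mu> @ \<tau>) = wword \<rho>"
      "length \<mu> + length \<tau> = ell \<rho>" "reduced (\<mu> @ \<tau>)" "ell \<tau> < ell (i # \<tau>)" "ell \<tau> < ell (j # \<tau>)"
    using parabolic_factorization[OF i j s] .
  have sm: "set \<mu> \<subseteq> {1..n}" using D(1) i j by auto
  have red\<mu>: "reduced \<mu>" and red\<tau>: "reduced \<tau>" using reduced_append D(5) by blast+
  have \<mu>ne: "\<mu> \<noteq> []"
  proof
    assume "\<mu> = []"
    then have "wword \<tau> = wword \<rho>" using D(3) by simp
    then have "ell (j # \<tau>) = ell (j # \<rho>)" "ell \<tau> = ell \<rho>" by (auto intro: ell_cong)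
    then show False using D(7) down by simp
  qed
  have "hd \<mu> \<noteq> i"
  proof
    assume "hd \<mu> = i"
    then obtain \<mu>' where \<mu>': "\<mu> = i # \<mu>'" using \<mu>ne by (cases \<mu>) auto
    have "ell (i # \<rho>) < ell \<rho>"
      using descent_of_reduced[of i "\<mu>' @ \<tau>" \<rho>] D(3,5) s \<mu>' by simp
    then show False using up by simp
  qed
  define L where "L = length \<mu>"
  have \<mu>alt: "\<mu> = alt_word j i L"
    using reduced_two_letters[OF D(1) ij red\<mu>] \<open>hd \<mu> \<noteq> i\<close> \<mu>ne unfolding L_def by (cases "length \<mu>") auto
  have "ell (i # \<rho>) = ell \<rho> + 1" using ell_Cons[OF i s] up by auto
  moreover have "ell (i # \<rho>) = ell ((i # \<mu>) @ \<tau>)" using D(3) by (intro ell_cong) simp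
  moreover have "ell ((i # \<mu>) @ \<tau>) \<le> ell (i # \<mu>) + ell \<tau>" using ell_append_le[of "i # \<mu>" \<tau>] i sm D(2) by simp
  moreover have "ell (i # \<mu>) \<le> L + 1" using ell_le_length[of "i # \<mu>"] i sm unfolding L_def by simp
  ultimately have "ell (i # \<mu>) = length (i # \<mu>)"
    using D(4) red\<tau> unfolding reduced_def L_def by simp
  then have "reduced (alt_word i j (Suc L))" using \<mu>alt i sm unfolding reduced_def by simp
  then have "Suc L \<le> braid_order i j" by (rule reduced_alt_word_le[OF i j ij])
  moreover have "1 \<le> L" using \<mu>ne L_def by (cases \<mu>) auto
  moreover have "wword (alt_word j i L @ \<tau>) = wword \<rho>" "L + length \<tau> = ell \<rho>"
    using D(3,4) \<mu>alt by simp_all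
  ultimately show ?thesis using D(2,6,7) red\<tau> by (intro that[of L \<tau>]) simp_all
qed

theorem ascent_imp_positive:
  "set \<rho> \<subseteq> {1..n} \<Longrightarrow> i \<in> {1..n} \<Longrightarrow> ell \<rho> < ell (i # \<rho>) \<Longrightarrow> positive (wword (rev \<rho>) (simple_root i))"
proof (induction "ell \<rho>" arbitrary: \<rho> i rule: less_induct)
  case less
  note s = less.prems(1) and i = less.prems(2) and up = less.prems(3)
  obtain \<sigma> where \<sigma>: "set \<sigma> \<subseteq> {1..n}" "length \<sigma> = ell \<rho>" "wword \<sigma> = wword \<rho>"
    using ell_witness[OF s] .
  have red\<sigma>: "reduced \<sigma>" using \<sigma> ell_cong[OF \<sigma>(3)] unfolding reduced_def by simp
  show ?case
  proof (cases \<sigma>)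
    case Nil
    then show ?thesis using wword_rev_cong[OF s \<sigma>(1) \<sigma>(3)[symmetric]] positive_simple_root by simp
  next
    case (Cons j \<sigma>')
    have j: "j \<in> {1..n}" using \<sigma>(1) Cons by simp
    have down: "ell (j # \<rho>) < ell \<rho>"
      using descent_of_reduced[of j \<sigma>' \<rho>] red\<sigma> s \<sigma>(3) Cons by simp
    then have ij: "i \<noteq> j" using up by auto
    obtain L \<tau> where D: "1 \<le> L" "L < braid_order i j" "set \<tau> \<subseteq> {1..n}" "wword (alt_word j i L @ \<tau>) = wword \<rho>"
        "L + length \<tau> = ell \<rho>" "reduced \<tau>" "ell \<tau> < ell (i # \<tau>)" "ell \<tau> < ell (j # \<tau>)"
      using ascent_descent_factorization[OF i j ij s up down] .
    obtain c c' where cc: "c \<ge> 0" "c' \<ge> 0"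
        "wword (rev (alt_word j i L)) (simple_root i) = (\<lambda>k. c * simple_root i k + c' * simple_root j k)"
      using rank2_root_nonneg[OF i j ij D(2)] .
    have lt: "ell \<tau> < ell \<rho>" using D(1,5,6) unfolding reduced_def by simp
    have Pi: "positive (wword (rev \<tau>) (simple_root i))" by (rule less.hyps[OF lt D(3) i D(7)])
    have Pj: "positive (wword (rev \<tau>) (simple_root j))" by (rule less.hyps[OF lt D(3) j D(8)])
    have sa: "set (alt_word j i L) \<subseteq> {1..n}" using alt_word_set[of j i L] i j by blast
    have "wword (rev \<rho>) = wword (rev (alt_word j i L @ \<tau>))"
      using wword_rev_cong[OF s _ D(4)[symmetric]] sa D(3) by simp
    then have e: "wword (rev \<rho>) (simple_root i) = wword (rev \<tau>) (\<lambda>k. c * simple_root i k + c' * simple_root j k)"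
      using cc(3) by (simp add: wword_append)
    have "(\<lambda>k. c * simple_root i k + c' * simple_root j k) \<noteq> (\<lambda>_. 0)"
      using wword_nonzero[of "rev \<rho>" "simple_root i"] s simple_root_nonzero e wword_zero by auto
    then show ?thesis unfolding e using positive_lincomb[OF _ Pi Pj cc(1,2)] D(3) by simp
  qed
qed

theorem positive_imp_ascent:
  assumes s: "set \<rho> \<subseteq> {1..n}" and a: "a \<in> {1..n}" and p: "positive (wword (rev \<rho>) (simple_root a))"
  shows "ell \<rho> < ell (a # \<rho>)"
proof (rule ccontr)
  assume "\<not> ell \<rho> < ell (a # \<rho>)"
  then have "ell \<rho> = ell (a # \<rho>) + 1" using ell_Cons[OF a s] by auto
  moreover have "ell (a # a # \<rho>) = ell \<rho>" using wword_Cons_Cons[OF a] by (metis ell_cong)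
  ultimately have "positive (wword (rev (a # \<rho>)) (simple_root a))"
    using ascent_imp_positive[of "a # \<rho>" a] a s by simp
  moreover have "wword (rev (a # \<rho>)) (simple_root a) = (\<lambda>k. - wword (rev \<rho>) (simple_root a) k)"
    using sref_simple_root[OF a] by (simp add: wword_append wword_neg)
  ultimately show False using p not_positive_uminus by metis
qed

lemma reduced_alt_word:
  assumes "a \<in> {1..n}" and "b \<in> {1..n}" and "a \<noteq> b" and "k \<le> braid_order a b"
  shows "reduced (alt_word a b k)"
  using assms
proof (induction k arbitrary: a b)
  case 0 then show ?case by (simp add: reduced_def ell_def)
next
  case (Suc k)
  have sI: "set (alt_word b a k) \<subseteq> {1..n}" using alt_word_set[of b a k] Suc.prems by auto
  have r: "reduced (alt_word b a k)" using Suc.IH[of b a] Suc.prems braid_order_sym by simp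
  obtain c c' where cc: "c \<ge> 0" "c' \<ge> 0"
      "wword (rev (alt_word b a k)) (simple_root a) = (\<lambda>l. c * simple_root a l + c' * simple_root b l)"
    using rank2_root_nonneg[of a b k] Suc.prems by (metis Suc_le_lessD)
  have "positive (wword (rev (alt_word b a k)) (simple_root a))"
  proof (rule positiveI)
    fix l show "0 \<le> wword (rev (alt_word b a k)) (simple_root a) l"
      unfolding cc(3) using cc by (simp add: simple_root_def)
  qed (use wword_nonzero[of "rev (alt_word b a k)"] sI simple_root_nonzero in simp)
  then have "ell (alt_word b a k) < ell (a # alt_word b a k)" using positive_imp_ascent[OF sI] Suc.prems by blast
  moreover have "ell (a # alt_word b a k) \<le> Suc k" using ell_le_length[of "a # alt_word b a k"] sI Suc.prems by simp
  ultimately show ?case using r sI Suc.prems unfolding reduced_def by simp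
qed

lemma wword_support_two:
  assumes "set \<sigma> \<subseteq> {a, b}" "\<And>k. k \<noteq> a \<Longrightarrow> k \<noteq> b \<Longrightarrow> v k = 0" "k \<noteq> a" "k \<noteq> b"
  shows "wword \<sigma> v k = 0"
  using assms by (induction \<sigma> arbitrary: k) (auto simp: srefl_def)

lemma descent_of_parabolic_part:
  assumes a: "a \<in> {1..n}" and b: "b \<in> {1..n}" and ab: "a \<noteq> b" and s: "set \<rho> \<subseteq> {1..n}"
    and \<mu>: "set \<mu> \<subseteq> {a, b}" and \<tau>: "set \<tau> \<subseteq> {1..n}" "ell \<tau> < ell (a # \<tau>)" "ell \<tau> < ell (b # \<tau>)"
    and e: "wword (\<mu> @ \<tau>) = wword \<rho>" and c: "c \<in> {a, b}" and down: "ell (c # \<rho>) < ell \<rho>"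
  shows "ell (c # \<mu>) < ell \<mu>"
proof (rule ccontr)
  have cI: "c \<in> {1..n}" and sm: "set \<mu> \<subseteq> {1..n}" using c \<mu> a b by auto
  assume "\<not> ell (c # \<mu>) < ell \<mu>"
  then have up: "ell \<mu> < ell (c # \<mu>)" using ell_Cons[OF cI sm] by auto
  define v where "v = wword (rev \<mu>) (simple_root c)"
  have P: "positive v" unfolding v_def using ascent_imp_positive[OF sm cI up] .
  have "v k = 0" if "k \<noteq> a" "k \<noteq> b" for k
    unfolding v_def by (rule wword_support_two[of "rev \<mu>" a b]) (use \<mu> c that in \<open>auto simp: simple_root_def\<close>)
  then have vd: "v = (\<lambda>k. v a * simple_root a k + v b * simple_root b k)"
    using ab by (auto simp: fun_eq_iff simple_root_def)
  have "positive (wword (rev \<tau>) (\<lambda>k. v a * simple_root a k + v b * simple_root b k))"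
    using P vd ascent_imp_positive[OF \<tau>(1) a \<tau>(2)] ascent_imp_positive[OF \<tau>(1) b \<tau>(3)] \<tau>(1)
    by (intro positive_lincomb) (auto simp: positive_def)
  moreover have "wword (rev \<rho>) = wword (rev \<tau>) \<circ> wword (rev \<mu>)"
    using wword_rev_cong[OF _ s e] sm \<tau>(1) by (simp add: wword_append)
  ultimately have "ell \<rho> < ell (c # \<rho>)" using positive_imp_ascent[OF s cI] vd unfolding v_def by simp
  then show False using down by simp
qed

theorem two_descents_braid_prefix:
  assumes a: "a \<in> {1..n}" and b: "b \<in> {1..n}" and ab: "a \<noteq> b" and s: "set \<rho> \<subseteq> {1..n}"
    and da: "ell (a # \<rho>) < ell \<rho>" and db: "ell (b # \<rho>) < ell \<rho>"
  obtains \<tau> where "set \<tau> \<subseteq> {1..n}" "wword (alt_word a b (braid_order a b) @ \<tau>) = wword \<rho>"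
    "braid_order a b + length \<tau> = ell \<rho>"
proof -
  obtain \<mu> \<tau> where D: "set \<mu> \<subseteq> {a, b}" "set \<tau> \<subseteq> {1..n}" "wword (\<mu> @ \<tau>) = wword \<rho>"
      "length \<mu> + length \<tau> = ell \<rho>" "reduced (\<mu> @ \<tau>)" "ell \<tau> < ell (a # \<tau>)" "ell \<tau> < ell (b # \<tau>)"
    using parabolic_factorization[OF a b s] .
  have red\<mu>: "reduced \<mu>" using reduced_append D(5) by blast
  have desc: "ell (a # \<mu>) < ell \<mu>" "ell (b # \<mu>) < ell \<mu>"
    using descent_of_parabolic_part[OF a b ab s D(1,2,6,7,3)] da db by auto
  have alt: "\<mu> = alt_word a b (length \<mu>) \<or> \<mu> = alt_word b a (length \<mu>)"
    using reduced_two_letters[OF D(1) ab red\<mu>] .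
  have "length \<mu> \<le> braid_order a b"
    using alt reduced_alt_word_le[OF a b ab] reduced_alt_word_le[OF b a ab[symmetric]] red\<mu> braid_order_sym by metis
  moreover have "length \<mu> \<noteq> braid_order a b \<Longrightarrow> False"
  proof -
    assume "length \<mu> \<noteq> braid_order a b"
    with \<open>length \<mu> \<le> braid_order a b\<close> have lt: "Suc (length \<mu>) \<le> braid_order a b" by simp
    have "reduced (alt_word b a (Suc (length \<mu>)))" "reduced (alt_word a b (Suc (length \<mu>)))"
      using reduced_alt_word[OF b a ab[symmetric]] reduced_alt_word[OF a b ab] lt braid_order_sym by metis+
    then have "reduced (b # \<mu>) \<or> reduced (a # \<mu>)" using alt by (metis alt_word.simps(2))
    then show False using desc red\<mu> unfolding reduced_def by auto
  qed
  ultimately have Leq: "length \<mu> = braid_order a b" by blast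
  have "wword \<mu> = wword (alt_word a b (braid_order a b))" using alt Leq wword_braid[OF a b ab] by metis
  then show ?thesis using that D(2,3,4) Leq by (simp add: wword_append)
qed

lemma two_descents_braid_words:
  assumes ab: "a \<noteq> b" and ra: "reduced (a # \<rho>)" and rb: "reduced (b # \<sigma>)"
    and e: "wword (a # \<rho>) = wword (b # \<sigma>)"
  obtains m' \<tau> where "braid_order a b = Suc m'"
    "reduced (a # alt_word b a m' @ \<tau>)" "wword (a # alt_word b a m' @ \<tau>) = wword (a # \<rho>)"
    "reduced (b # alt_word a b m' @ \<tau>)" "wword (b # alt_word a b m' @ \<tau>) = wword (a # \<rho>)"
proof -
  have a: "a \<in> {1..n}" and b: "b \<in> {1..n}" and s: "set (a # \<rho>) \<subseteq> {1..n}"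
    using ra rb unfolding reduced_def by auto
  have da: "ell (a # a # \<rho>) < ell (a # \<rho>)" by (rule descent_of_reduced[OF ra s refl])
  have db: "ell (b # a # \<rho>) < ell (a # \<rho>)" by (rule descent_of_reduced[OF rb s e[symmetric]])
  obtain \<tau> where \<tau>: "set \<tau> \<subseteq> {1..n}" "wword (alt_word a b (braid_order a b) @ \<tau>) = wword (a # \<rho>)"
      "braid_order a b + length \<tau> = ell (a # \<rho>)"
    using two_descents_braid_prefix[OF a b ab s da db] .
  obtain m' where m': "braid_order a b = Suc m'" using braid_order_ge_1[of a b] by (cases "braid_order a b") auto
  have sa: "set (alt_word a b (braid_order a b)) \<subseteq> {1..n}" "set (alt_word b a (braid_order a b)) \<subseteq> {1..n}"
    using alt_word_set a b by blast+
  have ea: "wword (alt_word a b (braid_order a b) @ \<tau>) = wword (a # \<rho>)" by (rule \<tau>(2))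
  have eb: "wword (alt_word b a (braid_order a b) @ \<tau>) = wword (a # \<rho>)"
    using \<tau>(2) wword_braid[OF a b ab] by (simp add: wword_append)
  have "reduced (alt_word a b (braid_order a b) @ \<tau>)" "reduced (alt_word b a (braid_order a b) @ \<tau>)"
    using sa \<tau>(1,3) ell_cong[OF ea] ell_cong[OF eb] unfolding reduced_def by simp_all
  with ea eb m' show ?thesis using that by simp
qed

end

section \<open>The invariant form and the symmetrizer\<close>

context simple_cartan_matrix begin

definition form :: "(nat \<Rightarrow> int) \<Rightarrow> (nat \<Rightarrow> int) \<Rightarrow> int" where
  "form u v = (\<Sum>p\<in>{1..n}. \<Sum>q\<in>{1..n}. u p * int (d p) * A p q * v q)"

lemma form_lincomb_left: "form (\<lambda>k. a * u k + b * w k) v = a * form u v + b * form w v"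
  unfolding form_def by (simp add: sum.distrib sum_distrib_left algebra_simps)

lemma form_lincomb_right: "form v (\<lambda>k. a * u k + b * w k) = a * form v u + b * form v w"
  unfolding form_def by (simp add: sum.distrib sum_distrib_left algebra_simps)

lemma form_simple_root_right:
  assumes k: "k \<in> {1..n}" shows "form u (simple_root k) = int (d k) * (\<Sum>p\<in>{1..n}. A k p * u p)"
proof -
  have "form u (simple_root k) = (\<Sum>p\<in>{1..n}. u p * int (d p) * A p k)"
    unfolding form_def by (rule sum.cong[OF refl]) (use k in \<open>simp add: simple_root_def if_distrib cong: if_cong\<close>)
  also have "\<dots> = (\<Sum>p\<in>{1..n}. int (d k) * (A k p * u p))"
    by (rule sum.cong[OF refl]) (use d_symmetrizes k in \<open>auto simp: algebra_simps\<close>)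
  finally show ?thesis by (simp add: sum_distrib_left)
qed

lemma form_simple_root_left:
  assumes k: "k \<in> {1..n}" shows "form (simple_root k) v = int (d k) * (\<Sum>q\<in>{1..n}. A k q * v q)"
proof -
  have "form (simple_root k) v = (\<Sum>p\<in>{1..n}. if p = k then (\<Sum>q\<in>{1..n}. int (d p) * A p q * v q) else 0)"
    unfolding form_def by (rule sum.cong[OF refl]) (auto simp: simple_root_def algebra_simps)
  then show ?thesis using k by (simp add: sum_distrib_left algebra_simps)
qed

lemma form_simple_root_simple_root: "k \<in> {1..n} \<Longrightarrow> form (simple_root k) (simple_root k) = 2 * int (d k)"
  using form_simple_root_left[of k "simple_root k"] cartan_diag[of k]
  by (simp add: simple_root_def if_distrib cong: if_cong)

lemma form_sref: assumes k: "k \<in> {1..n}" shows "form (sref k u) (sref k v) = form u v"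
proof -
  define s where "s = (\<Sum>j\<in>{1..n}. A k j * u j)"
  define t where "t = (\<Sum>j\<in>{1..n}. A k j * v j)"
  have su: "sref k u = (\<lambda>j. 1 * u j + (- s) * simple_root k j)"
    unfolding sref_eq s_def by (auto simp: fun_eq_iff simple_root_def)
  have sv: "sref k v = (\<lambda>j. 1 * v j + (- t) * simple_root k j)"
    unfolding sref_eq t_def by (auto simp: fun_eq_iff simple_root_def)
  have "form (sref k u) (sref k v)
      = form u v - t * form u (simple_root k) - s * form (simple_root k) v + s * t * form (simple_root k) (simple_root k)"
    unfolding su sv form_lincomb_left form_lincomb_right by (simp add: algebra_simps)
  also have "\<dots> = form u v"
    unfolding form_simple_root_simple_root[OF k]
    unfolding form_simple_root_right[OF k] form_simple_root_left[OF k] s_def[symmetric] t_def[symmetric]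
    by (simp add: algebra_simps)
  finally show ?thesis .
qed

lemma form_wword: "set \<rho> \<subseteq> {1..n} \<Longrightarrow> form (wword \<rho> u) (wword \<rho> v) = form u v"
  by (induction \<rho>) (auto simp: form_sref)

lemma form_pos: assumes "\<exists>i\<in>{1..n}. u i \<noteq> 0" shows "form u u > 0"
proof -
  have "(\<Sum>i\<in>{1..n}. \<Sum>j\<in>{1..n}. real_of_int (u i) * real (d i) * real_of_int (A i j) * real_of_int (u j)) > 0"
    by (rule cartan_pos_def) (use assms in auto)
  moreover have "(\<Sum>i\<in>{1..n}. \<Sum>j\<in>{1..n}. real_of_int (u i) * real (d i) * real_of_int (A i j) * real_of_int (u j))
      = real_of_int (form u u)"
    unfolding form_def by simp
  ultimately show ?thesis by simp
qed

lemma sref_simple_root_other: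
  assumes "p \<in> {1..n}" "p \<noteq> q" shows "sref q (simple_root p) = (\<lambda>k. 1 * simple_root p k + (- A q p) * simple_root q k)"
proof -
  have "(\<Sum>j\<in>{1..n}. A q j * simple_root p j) = A q p"
    using assms by (simp add: simple_root_def if_distrib cong: if_cong)
  then show ?thesis unfolding sref_eq using assms by (auto simp: fun_eq_iff simple_root_def)
qed

text \<open>By indecomposability, the set of \<open>k\<close> such that every \<open>W\<close>-conjugate of \<open>\<alpha>\<^sub>k\<close> is orthogonal
  to \<open>\<alpha>\<^sub>b\<close> is closed under neighbours; it cannot contain \<open>b\<close> itself, so it is empty.\<close>

lemma exists_nonorthogonal_conjugate:
  assumes m: "m \<in> {1..n}" and b: "b \<in> {1..n}"
  obtains \<rho> where "set \<rho> \<subseteq> {1..n}" "form (wword \<rho> (simple_root m)) (simple_root b) \<noteq> 0"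
proof -
  define J where "J = {k \<in> {1..n}. \<forall>\<rho>. set \<rho> \<subseteq> {1..n} \<longrightarrow> form (wword \<rho> (simple_root k)) (simple_root b) = 0}"
  have "b \<notin> J"
  proof
    assume "b \<in> J"
    then have "\<forall>\<rho>. set \<rho> \<subseteq> {1..n} \<longrightarrow> form (wword \<rho> (simple_root b)) (simple_root b) = 0"
      unfolding J_def by blast
    from this[rule_format, of "[]"] have "form (wword [] (simple_root b)) (simple_root b) = 0" by simp
    then show False using form_simple_root_simple_root[OF b] d_pos[OF b] by simp
  qed
  have "J = {}"
  proof (rule ccontr)
    assume "J \<noteq> {}"
    moreover have "J \<subseteq> {1..n}" "J \<noteq> {1..n}" using b \<open>b \<notin> J\<close> unfolding J_def by blast+
    ultimately obtain p q where p: "p \<in> J" and q: "q \<in> {1..n} - J" and pq: "A p q \<noteq> 0"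
      using cartan_indecomposable by blast
    have pI: "p \<in> {1..n}" and qI: "q \<in> {1..n}" and "p \<noteq> q" using p q \<open>J \<subseteq> {1..n}\<close> by auto
    have qp: "A q p \<noteq> 0" using cartan_zero_iff[OF pI qI] pq by simp
    have p0: "form (wword \<rho> (simple_root p)) (simple_root b) = 0" if "set \<rho> \<subseteq> {1..n}" for \<rho>
      using p that unfolding J_def by blast
    have "form (wword \<rho> (simple_root q)) (simple_root b) = 0" if s: "set \<rho> \<subseteq> {1..n}" for \<rho>
    proof -
      have e: "wword (\<rho> @ [q]) (simple_root p)
          = (\<lambda>k. 1 * wword \<rho> (simple_root p) k + (- A q p) * wword \<rho> (simple_root q) k)"
        by (simp only: wword_append comp_apply weyl_word.simps id_apply
            sref_simple_root_other[OF pI \<open>p \<noteq> q\<close>] wword_lincomb)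
      have "form (wword (\<rho> @ [q]) (simple_root p)) (simple_root b)
          = 1 * form (wword \<rho> (simple_root p)) (simple_root b) + (- A q p) * form (wword \<rho> (simple_root q)) (simple_root b)"
        unfolding e by (rule form_lincomb_left)
      then show ?thesis using p0[of "\<rho> @ [q]"] p0[OF s] s qI qp by simp
    qed
    then have "q \<in> J" using qI unfolding J_def by blast
    then show False using q by blast
  qed
  then have "m \<notin> J" by simp
  then show ?thesis using that m unfolding J_def by blast
qed

text \<open>Expand \<open>(\<gamma>, \<gamma>) \<ge> 0\<close> for \<open>\<gamma> = 2 \<beta> - N \<alpha>\<^sub>b\<close>, where \<open>(\<beta>, \<alpha>\<^sub>b) = d\<^sub>b N\<close>.\<close>

lemma d_le_3_of_nonorthogonal:
  assumes b: "b \<in> {1..n}" and BB: "form \<beta> \<beta> = 2" and nonorth: "form \<beta> (simple_root b) \<noteq> 0"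
  shows "d b \<le> 3"
proof -
  define N where "N = (\<Sum>p\<in>{1..n}. A b p * \<beta> p)"
  have Bb: "form \<beta> (simple_root b) = int (d b) * N" unfolding N_def by (rule form_simple_root_right[OF b])
  have bB: "form (simple_root b) \<beta> = int (d b) * N" unfolding N_def by (rule form_simple_root_left[OF b])
  have "N \<noteq> 0" using nonorth Bb by auto
  then have "N * N > 0" by (auto simp: zero_less_mult_iff linorder_neq_iff)
  then have N2: "N * N \<ge> 1" by simp
  have db: "int (d b) \<ge> 1" using d_pos[OF b] by simp
  show ?thesis
  proof (cases "\<exists>i\<in>{1..n}. 2 * \<beta> i + (- N) * simple_root b i \<noteq> 0")
    case True
    have "form (\<lambda>k. 2 * \<beta> k + (- N) * simple_root b k) (\<lambda>k. 2 * \<beta> k + (- N) * simple_root b k)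
        = 4 * form \<beta> \<beta> - 2 * N * form \<beta> (simple_root b) - 2 * N * form (simple_root b) \<beta>
          + N * N * form (simple_root b) (simple_root b)"
      unfolding form_lincomb_left form_lincomb_right by (simp add: algebra_simps)
    then have "0 < 8 - 2 * (N * N) * int (d b)"
      using form_pos[OF True] BB Bb bB form_simple_root_simple_root[OF b] by (simp add: algebra_simps)
    moreover have "(N * N) * int (d b) \<ge> int (d b)" using N2 db by (simp add: mult_right_mono)
    ultimately show ?thesis by simp
  next
    case False
    then have z: "\<And>i. i \<in> {1..n} \<Longrightarrow> 2 * \<beta> i = N * simple_root b i" by auto
    have zb: "\<beta> i = \<beta> b * simple_root b i + 0 * simple_root b i" if i: "i \<in> {1..n}" for i
      using z[OF i] by (cases "i = b") (auto simp: simple_root_def)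
    have "form \<beta> \<beta> = form (\<lambda>k. \<beta> b * simple_root b k + 0 * simple_root b k) (\<lambda>k. \<beta> b * simple_root b k + 0 * simple_root b k)"
      unfolding form_def by (rule sum.cong[OF refl], rule sum.cong[OF refl]) (simp only: zb)
    also have "\<dots> = \<beta> b * \<beta> b * form (simple_root b) (simple_root b)"
      unfolding form_lincomb_left form_lincomb_right by (simp add: algebra_simps)
    finally have "(\<beta> b * \<beta> b) * int (d b) = 1" using BB form_simple_root_simple_root[OF b] by simp
    moreover have "\<beta> b * \<beta> b \<ge> 0" by simp
    ultimately have "\<beta> b \<noteq> 0" by (cases "\<beta> b = 0") auto
    then have "\<beta> b * \<beta> b > 0" by (auto simp: zero_less_mult_iff linorder_neq_iff)
    then have "int (d b) = 1" using \<open>(\<beta> b * \<beta> b) * int (d b) = 1\<close> pos_zmult_eq_1_iff by blast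
    then show ?thesis by simp
  qed
qed

lemma d_le_3: assumes b: "b \<in> {1..n}" shows "d b \<le> 3"
proof -
  obtain m where m: "m \<in> {1..n}" "d m = 1" using exists_d_eq_1 by blast
  obtain \<rho> where \<rho>: "set \<rho> \<subseteq> {1..n}" "form (wword \<rho> (simple_root m)) (simple_root b) \<noteq> 0"
    using exists_nonorthogonal_conjugate[OF m(1) b] .
  have "form (wword \<rho> (simple_root m)) (wword \<rho> (simple_root m)) = 2"
    using form_wword[OF \<rho>(1)] form_simple_root_simple_root[OF m(1)] m(2) by simp
  then show ?thesis using d_le_3_of_nonorthogonal[OF b _ \<rho>(2)] by blast
qed

lemma d_multiple_bond:
  assumes a: "a \<in> {1..n}" and b: "b \<in> {1..n}" and ab: "a \<noteq> b" and A: "A a b = -2 \<or> A a b = -3"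
  shows "d a = 1 \<and> int (d b) = - A a b"
proof -
  have "A b a = -1" using cartan_rank2_cases[OF a b ab] A by (auto simp: rank2_pair_def)
  then have rel: "int (d a) * A a b = - int (d b)" using d_symmetrizes[OF a b] by simp
  have "d b \<le> 3" "d a \<ge> 1" using d_le_3[OF b] d_pos[OF a] by auto
  then have "d a = 1" using A rel by auto
  then show ?thesis using rel by simp
qed

end

section \<open>A \<open>t\<close>-deformation of the Weyl group action on weights\<close>

definition tvar :: "int poly" where
  "tvar = [:0, 1:]"

definition nonneg_coeffs :: "int poly \<Rightarrow> bool" where
  "nonneg_coeffs p \<longleftrightarrow> (\<forall>k. 0 \<le> coeff p k)"

lemma nonneg_coeffs_0 [simp]: "nonneg_coeffs 0"
  unfolding nonneg_coeffs_def by simp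

lemma nonneg_coeffs_1 [simp]: "nonneg_coeffs 1"
  unfolding nonneg_coeffs_def by (simp add: coeff_1)

lemma nonneg_coeffs_tvar [simp]: "nonneg_coeffs tvar"
  unfolding nonneg_coeffs_def tvar_def by (simp add: coeff_pCons split: nat.splits)

lemma nonneg_coeffs_add [simp]: "nonneg_coeffs p \<Longrightarrow> nonneg_coeffs q \<Longrightarrow> nonneg_coeffs (p + q)"
  unfolding nonneg_coeffs_def by simp

lemma nonneg_coeffs_mult [simp]: "nonneg_coeffs p \<Longrightarrow> nonneg_coeffs q \<Longrightarrow> nonneg_coeffs (p * q)"
  unfolding nonneg_coeffs_def coeff_mult by (auto intro: sum_nonneg)

lemma nonneg_coeffs_power [simp]: "nonneg_coeffs p \<Longrightarrow> nonneg_coeffs (p ^ k)"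
  by (induction k) auto

lemma nonneg_coeffs_pCons: "nonneg_coeffs (pCons a p) \<Longrightarrow> 0 \<le> a \<and> nonneg_coeffs p"
  unfolding nonneg_coeffs_def by (metis coeff_pCons_0 coeff_pCons_Suc)

text \<open>The deformed analogue of \<open>rank2_iter\<close>: \<open>(X, Y)\<close> are the coordinates at \<open>a, b\<close>, and \<open>(U, V)\<close>
  accumulate the multiples of the coordinates at \<open>a, b\<close> that get added to all other coordinates.\<close>

fun qrank2_iter :: "int poly \<Rightarrow> int poly \<Rightarrow> int poly \<Rightarrow> int poly \<Rightarrow> bool \<Rightarrow> nat
    \<Rightarrow> int poly \<times> int poly \<times> int poly \<times> int poly \<Rightarrow> int poly \<times> int poly \<times> int poly \<times> int poly" where
  "qrank2_iter caa cbb cab cba f 0 s = s"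
| "qrank2_iter caa cbb cab cba True (Suc k) s =
     (case qrank2_iter caa cbb cab cba False k s of (X, Y, U, V) \<Rightarrow> (caa * X, Y + cba * X, U + X, V))"
| "qrank2_iter caa cbb cab cba False (Suc k) s =
     (case qrank2_iter caa cbb cab cba True k s of (X, Y, U, V) \<Rightarrow> (X + cab * Y, cbb * Y, U, V + Y))"

lemma qrank2_iter_linear:
  "fst (qrank2_iter caa cbb cab cba f L (x, y, u, v))
     = fst (qrank2_iter caa cbb cab cba f L (1, 0, 0, 0)) * x + fst (qrank2_iter caa cbb cab cba f L (0, 1, 0, 0)) * y
   \<and> fst (snd (qrank2_iter caa cbb cab cba f L (x, y, u, v)))
     = fst (snd (qrank2_iter caa cbb cab cba f L (1, 0, 0, 0))) * x
       + fst (snd (qrank2_iter caa cbb cab cba f L (0, 1, 0, 0))) * y"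
proof (induction L arbitrary: f)
  case (Suc L)
  show ?case using Suc.IH[of "\<not> f"] by (cases f) (auto simp: algebra_simps split: prod.splits)
qed simp

text \<open>The rank-two data \<open>(-t\<^bsup>2d\<^sub>a\<^esup>, -t\<^bsup>2d\<^sub>b\<^esup>, c\<^sub>a\<^sub>b, c\<^sub>b\<^sub>a, m\<^sub>a\<^sub>b)\<close> that occur, see \<open>qrank2_data_cartan\<close>.\<close>

definition qrank2_data :: "int poly \<Rightarrow> int poly \<Rightarrow> int poly \<Rightarrow> int poly \<Rightarrow> nat \<Rightarrow> bool" where
  "qrank2_data caa cbb cab cba m \<longleftrightarrow>
     (cab = 0 \<and> cba = 0 \<and> m = 2) \<or>
     (\<exists>z. nonneg_coeffs z \<and> caa = - (z * z) \<and> cbb = - (z * z) \<and> cab = z \<and> cba = z \<and> m = 3) \<or>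
     (caa, cbb, cab, cba, m) \<in> {(- (tvar ^ 4), - (tvar ^ 2), tvar, tvar ^ 3 + tvar, 4),
       (- (tvar ^ 2), - (tvar ^ 4), tvar ^ 3 + tvar, tvar, 4),
       (- (tvar ^ 6), - (tvar ^ 2), tvar, tvar ^ 5 + tvar ^ 3 + tvar, 6),
       (- (tvar ^ 2), - (tvar ^ 6), tvar ^ 5 + tvar ^ 3 + tvar, tvar, 6)}"

lemma qrank2_iter_braid:
  "qrank2_data caa cbb cab cba m \<Longrightarrow> qrank2_iter caa cbb cab cba True m s = qrank2_iter caa cbb cab cba False m s"
  unfolding qrank2_data_def by (cases s) (auto simp: eval_nat_numeral algebra_simps)

lemma qrank2_iter_nonneg:
  assumes "qrank2_data caa cbb cab cba m" "L < m"
  shows "nonneg_coeffs (fst (qrank2_iter caa cbb cab cba False L (1, 0, 0, 0)))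
       \<and> nonneg_coeffs (fst (qrank2_iter caa cbb cab cba False L (0, 1, 0, 0)))"
  using assms unfolding qrank2_data_def
  by (auto simp: less_Suc_eq numeral_eq_Suc algebra_simps power_add[symmetric])

context simple_cartan_matrix begin

text \<open>\<open>(T\<^sub>a y)\<^sub>k = y\<^sub>k \<cdot> (bond_poly k a \<cdot> y\<^sub>a)\<close> for \<open>k \<noteq> a\<close>, where \<open>t\<close> acts by \<open>f(u) \<mapsto> f(q u)\<close>;
  compare the definition of \<open>Tbraid\<close>.\<close>

definition bond_poly :: "nat \<Rightarrow> nat \<Rightarrow> int poly" where
  "bond_poly k a = (if A k a = -1 then tvar ^ d a else if A k a = -2 then tvar ^ 3 + tvar
     else if A k a = -3 then tvar ^ 5 + tvar ^ 3 + tvar else 0)"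

definition qrefl :: "nat \<Rightarrow> (nat \<Rightarrow> int poly) \<Rightarrow> (nat \<Rightarrow> int poly)" where
  "qrefl a g = (\<lambda>k. if k \<notin> {1..n} then g k else if k = a then - (tvar ^ (2 * d a)) * g a
     else g k + bond_poly k a * g a)"

fun qword :: "nat list \<Rightarrow> (nat \<Rightarrow> int poly) \<Rightarrow> (nat \<Rightarrow> int poly)" where
  "qword [] g = g"
| "qword (a # \<rho>) g = qrefl a (qword \<rho> g)"

lemma qword_append: "qword (\<rho> @ \<sigma>) g = qword \<rho> (qword \<sigma> g)"
  by (induction \<rho>) auto

lemma qrank2_data_cartan:
  assumes a: "a \<in> {1..n}" and b: "b \<in> {1..n}" and ab: "a \<noteq> b"
  shows "qrank2_data (- (tvar ^ (2 * d a))) (- (tvar ^ (2 * d b))) (bond_poly a b) (bond_poly b a) (braid_order a b)"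
proof -
  have ds: "int (d a) * A a b = int (d b) * A b a" by (rule d_symmetrizes[OF a b])
  have power_double: "tvar ^ (2 * k) = tvar ^ k * tvar ^ k" for k by (simp add: mult_2 power_add)
  from cartan_rank2_cases[OF a b ab] show ?thesis
    unfolding rank2_pair_def
  proof (elim insertE emptyE; simp only: prod.inject)
    assume h: "A a b = -1 \<and> A b a = -1"
    then have "d b = d a" using ds by simp
    then show ?thesis using h
      by (auto simp: qrank2_data_def bond_poly_def braid_order_def coxeter_entry_def power_double
          intro!: exI[of _ "tvar ^ d a"])
  next
    assume h: "A a b = -1 \<and> A b a = -2"
    then have "d b = 1" "d a = 2" using d_multiple_bond[OF b a ab[symmetric]] by auto
    then show ?thesis using h by (simp add: qrank2_data_def bond_poly_def braid_order_def coxeter_entry_def)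
  next
    assume h: "A a b = -2 \<and> A b a = -1"
    then have "d a = 1" "d b = 2" using d_multiple_bond[OF a b ab] by auto
    then show ?thesis using h by (simp add: qrank2_data_def bond_poly_def braid_order_def coxeter_entry_def)
  next
    assume h: "A a b = -1 \<and> A b a = -3"
    then have "d b = 1" "d a = 3" using d_multiple_bond[OF b a ab[symmetric]] by auto
    then show ?thesis using h by (simp add: qrank2_data_def bond_poly_def braid_order_def coxeter_entry_def)
  next
    assume h: "A a b = -3 \<and> A b a = -1"
    then have "d a = 1" "d b = 3" using d_multiple_bond[OF a b ab] by auto
    then show ?thesis using h by (simp add: qrank2_data_def bond_poly_def braid_order_def coxeter_entry_def)
  qed (simp add: qrank2_data_def bond_poly_def braid_order_def coxeter_entry_def)
qed

definition qrank2_coords :: "nat \<Rightarrow> nat \<Rightarrow> (nat \<Rightarrow> int poly) \<Rightarrow> bool \<Rightarrow> nat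
    \<Rightarrow> int poly \<times> int poly \<times> int poly \<times> int poly" where
  "qrank2_coords a b g f k = qrank2_iter (- (tvar ^ (2 * d a))) (- (tvar ^ (2 * d b))) (bond_poly a b) (bond_poly b a)
     f k (g a, g b, 0, 0)"

lemma qword_alt_word:
  assumes a: "a \<in> {1..n}" and b: "b \<in> {1..n}" and ab: "a \<noteq> b"
  shows "qword (if f then alt_word a b k else alt_word b a k) g = (\<lambda>l. if l \<notin> {1..n} then g l
     else if l = a then fst (qrank2_coords a b g f k)
     else if l = b then fst (snd (qrank2_coords a b g f k))
     else g l + bond_poly l a * fst (snd (snd (qrank2_coords a b g f k)))
       + bond_poly l b * snd (snd (snd (qrank2_coords a b g f k))))"
proof (induction k arbitrary: f)
  case (Suc k)
  have IH: "qword (if f then alt_word b a k else alt_word a b k) g = (\<lambda>l. if l \<notin> {1..n} then g l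
     else if l = a then fst (qrank2_coords a b g (\<not> f) k)
     else if l = b then fst (snd (qrank2_coords a b g (\<not> f) k))
     else g l + bond_poly l a * fst (snd (snd (qrank2_coords a b g (\<not> f) k)))
       + bond_poly l b * snd (snd (snd (qrank2_coords a b g (\<not> f) k))))"
    using Suc.IH[of "\<not> f"] by (cases f) simp_all
  show ?case
    using IH a b ab by (cases f) (auto simp: fun_eq_iff qrefl_def qrank2_coords_def algebra_simps split: prod.splits)
qed (auto simp: fun_eq_iff qrank2_coords_def)

lemma qword_braid:
  assumes a: "a \<in> {1..n}" and b: "b \<in> {1..n}" and ab: "a \<noteq> b"
  shows "qword (alt_word a b (braid_order a b)) = qword (alt_word b a (braid_order a b))"
proof
  fix g
  have braid: "qrank2_coords a b g True (braid_order a b) = qrank2_coords a b g False (braid_order a b)"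
    unfolding qrank2_coords_def by (rule qrank2_iter_braid[OF qrank2_data_cartan[OF a b ab]])
  show "qword (alt_word a b (braid_order a b)) g = qword (alt_word b a (braid_order a b)) g"
    using qword_alt_word[OF a b ab, of True "braid_order a b" g] qword_alt_word[OF a b ab, of False "braid_order a b" g]
    unfolding braid by simp
qed

lemma qrank2_root_nonneg:
  assumes i: "i \<in> {1..n}" and j: "j \<in> {1..n}" and ij: "i \<noteq> j" and L: "L < braid_order i j"
  obtains \<alpha> \<beta> where "nonneg_coeffs \<alpha>" "nonneg_coeffs \<beta>" "\<And>h. qword (alt_word j i L) h i = \<alpha> * h i + \<beta> * h j"
proof -
  let ?S = "qrank2_iter (- (tvar ^ (2 * d i))) (- (tvar ^ (2 * d j))) (bond_poly i j) (bond_poly j i) False L"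
  have "qword (alt_word j i L) h i = fst (?S (1, 0, 0, 0)) * h i + fst (?S (0, 1, 0, 0)) * h j" for h
  proof -
    have "qword (alt_word j i L) h i = fst (?S (h i, h j, 0, 0))"
      using qword_alt_word[OF i j ij, of False L h] i by (simp add: qrank2_coords_def)
    also have "\<dots> = fst (?S (1, 0, 0, 0)) * h i + fst (?S (0, 1, 0, 0)) * h j"
      by (rule conjunct1[OF qrank2_iter_linear])
    finally show ?thesis .
  qed
  then show ?thesis
    using that qrank2_iter_nonneg[OF qrank2_data_cartan[OF i j ij] L] by blast
qed

text \<open>Matsumoto's argument: two reduced words for the same element either start with the
  same letter or, by \<open>two_descents_braid_words\<close>, are linked through two reduced words that
  differ by a braid relation.\<close>

theorem qword_reduced_cong: "reduced \<rho> \<Longrightarrow> reduced \<sigma> \<Longrightarrow> wword \<rho> = wword \<sigma> \<Longrightarrow> qword \<rho> = qword \<sigma>"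
proof (induction "length \<rho>" arbitrary: \<rho> \<sigma> rule: less_induct)
  case less
  have IH: "qword \<mu> = qword \<nu>"
    if "length \<mu> < length \<rho>" "reduced \<mu>" "reduced \<nu>" "wword \<mu> = wword \<nu>" for \<mu> \<nu>
    using less.hyps that by blast
  have len: "length \<sigma> = length \<rho>"
    using less.prems ell_cong[OF less.prems(3)] unfolding reduced_def by simp
  show ?case
  proof (cases \<rho>)
    case Nil
    then show ?thesis using len by simp
  next
    case (Cons a \<rho>')
    then obtain b \<sigma>' where \<sigma>: "\<sigma> = b # \<sigma>'" using len by (cases \<sigma>) auto
    have ra: "reduced (a # \<rho>')" and rb: "reduced (b # \<sigma>')" using less.prems Cons \<sigma> by simp_all
    have a: "a \<in> {1..n}" and b: "b \<in> {1..n}" using ra rb unfolding reduced_def by simp_all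
    have e: "wword (a # \<rho>') = wword (b # \<sigma>')" using less.prems(3) Cons \<sigma> by simp
    show ?thesis
    proof (cases "a = b")
      case True
      have "wword \<rho>' = wword \<sigma>'" by (rule wword_Cons_cancel[OF a]) (use e True in simp)
      then have "qword \<rho>' = qword \<sigma>'"
        using IH[of \<rho>' \<sigma>'] Cons reduced_ConsD[OF ra] reduced_ConsD[OF rb] by simp
      then show ?thesis using Cons \<sigma> True by (intro ext) simp
    next
      case False
      obtain m' \<tau> where m': "braid_order a b = Suc m'"
          and r1: "reduced (a # alt_word b a m' @ \<tau>)" "wword (a # alt_word b a m' @ \<tau>) = wword (a # \<rho>')"
          and r2: "reduced (b # alt_word a b m' @ \<tau>)" "wword (b # alt_word a b m' @ \<tau>) = wword (a # \<rho>')"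
        using two_descents_braid_words[OF False ra rb e] .
      have "wword \<rho>' = wword (alt_word b a m' @ \<tau>)" by (rule wword_Cons_cancel[OF a]) (use r1(2) in simp)
      then have "qword \<rho>' = qword (alt_word b a m' @ \<tau>)"
        using IH[of \<rho>' "alt_word b a m' @ \<tau>"] Cons reduced_ConsD[OF ra] reduced_ConsD[OF r1(1)] by simp
      moreover have "wword \<sigma>' = wword (alt_word a b m' @ \<tau>)" by (rule wword_Cons_cancel[OF b]) (use r2(2) e in simp)
      then have "qword \<sigma>' = qword (alt_word a b m' @ \<tau>)"
        using IH[of \<sigma>' "alt_word a b m' @ \<tau>"] len Cons \<sigma> reduced_ConsD[OF rb] reduced_ConsD[OF r2(1)] by simp
      moreover have "qrefl a (qword (alt_word b a m' @ \<tau>) g) = qrefl b (qword (alt_word a b m' @ \<tau>) g)" for g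
      proof -
        have "qword (a # alt_word b a m') = qword (b # alt_word a b m')" using qword_braid[OF a b False] m' by simp
        then have "qword ((a # alt_word b a m') @ \<tau>) g = qword ((b # alt_word a b m') @ \<tau>) g"
          by (simp only: qword_append)
        then show ?thesis by simp
      qed
      ultimately show ?thesis using Cons \<sigma> by (intro ext) simp
    qed
  qed
qed

theorem qword_nonneg: "reduced (i # \<rho>) \<Longrightarrow> (\<forall>k. nonneg_coeffs (g k)) \<Longrightarrow> nonneg_coeffs (qword \<rho> g i)"
proof (induction "length \<rho>" arbitrary: \<rho> i g rule: less_induct)
  case less
  note ri = less.prems(1) and gn = less.prems(2)
  have i: "i \<in> {1..n}" and s: "set \<rho> \<subseteq> {1..n}" using ri unfolding reduced_def by auto
  have r\<rho>: "reduced \<rho>" using reduced_ConsD[OF ri] .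
  show ?case
  proof (cases \<rho>)
    case Nil then show ?thesis using gn by simp
  next
    case (Cons j \<rho>')
    have j: "j \<in> {1..n}" using s Cons by auto
    have ij: "i \<noteq> j" using not_reduced_Cons_Cons ri Cons by blast
    have up: "ell \<rho> < ell (i # \<rho>)" using ri r\<rho> unfolding reduced_def by simp
    have down: "ell (j # \<rho>) < ell \<rho>" using descent_of_reduced[of j \<rho>' \<rho>] r\<rho> s Cons by simp
    obtain L \<tau> where D: "1 \<le> L" "L < braid_order i j" "set \<tau> \<subseteq> {1..n}" "wword (alt_word j i L @ \<tau>) = wword \<rho>"
        "L + length \<tau> = ell \<rho>" "reduced \<tau>" "ell \<tau> < ell (i # \<tau>)" "ell \<tau> < ell (j # \<tau>)"
      using ascent_descent_factorization[OF i j ij s up down] .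
    obtain \<alpha> \<beta> where \<alpha>\<beta>: "nonneg_coeffs \<alpha>" "nonneg_coeffs \<beta>"
        "\<And>h. qword (alt_word j i L) h i = \<alpha> * h i + \<beta> * h j"
      using qrank2_root_nonneg[OF i j ij D(2)] by blast
    have sa: "set (alt_word j i L) \<subseteq> {1..n}" using alt_word_set i j by blast
    have "reduced (alt_word j i L @ \<tau>)" using sa D ell_cong[OF D(4)] unfolding reduced_def by simp
    then have "qword \<rho> = qword (alt_word j i L @ \<tau>)" using qword_reduced_cong[OF r\<rho> _ D(4)[symmetric]] by simp
    then have "qword \<rho> g i = \<alpha> * qword \<tau> g i + \<beta> * qword \<tau> g j" by (simp add: qword_append \<alpha>\<beta>(3))
    moreover have "length \<tau> < length \<rho>" using D(1,5) r\<rho> unfolding reduced_def by simp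
    moreover have "reduced (i # \<tau>)" "reduced (j # \<tau>)"
      using D(3,6,7,8) i j ell_Cons[OF i D(3)] ell_Cons[OF j D(3)] unfolding reduced_def by auto
    ultimately show ?thesis using less.hyps gn \<alpha>\<beta>(1,2) by simp
  qed
qed

end

section \<open>Rational functions\<close>

abbreviation dilate :: "complex \<Rightarrow> complex poly \<Rightarrow> complex poly" where
  "dilate c p \<equiv> pcompose p [:0, c:]"

lemma dilate_nonzero: "c \<noteq> 0 \<Longrightarrow> r \<noteq> 0 \<Longrightarrow> dilate c r \<noteq> 0"
  using pcompose_eq_0[of r "[:0, c:]"] by auto

lemma dilate_dilate: "dilate c (dilate c' p) = dilate (c' * c) p"
proof -
  have "pcompose [:0, c':] [:0, c:] = [:0, c' * c:]" by (simp add: pcompose_pCons algebra_simps)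
  then show ?thesis by (simp add: pcompose_assoc[symmetric])
qed

lemma Fract_eq_0_iff: "r \<noteq> 0 \<Longrightarrow> Fract p r = 0 \<longleftrightarrow> p = 0"
  by (simp add: fract_expand(1) eq_fract)

lemma rscale_Fract:
  assumes c: "c \<noteq> 0" and r: "r \<noteq> 0"
  shows "rscale c (Fract p r) = Fract (dilate c p) (dilate c r)"
  unfolding rscale_def
proof (rule someI2[where a = "Fract (dilate c p) (dilate c r)"])
  fix g assume "\<exists>p' r'. r' \<noteq> 0 \<and> Fract p r = Fract p' r' \<and> g = Fract (dilate c p') (dilate c r')"
  then obtain p' r' where h: "r' \<noteq> 0" "Fract p r = Fract p' r'" "g = Fract (dilate c p') (dilate c r')" by blast
  have "p * r' = p' * r" using h r eq_fract(1) by blast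
  then have "dilate c p' * dilate c r = dilate c p * dilate c r'" by (metis pcompose_mult mult.commute)
  then show "g = Fract (dilate c p) (dilate c r)"
    using h(3) eq_fract(1)[OF dilate_nonzero[OF c h(1)] dilate_nonzero[OF c r]] by simp
qed (use r in blast)

lemma rscale_1 [simp]: "c \<noteq> 0 \<Longrightarrow> rscale c 1 = 1"
  using rscale_Fract[of c 1 1] by (simp add: fract_collapse pcompose_1)

lemma rscale_by_1 [simp]: "rscale 1 f = f"
proof -
  obtain a b where "f = Fract a b" "b \<noteq> 0" by (cases f)
  then show ?thesis using rscale_Fract[of 1 b a] by (simp add: pcompose_idR[unfolded pCons_one] one_pCons)
qed

lemma rscale_mult: assumes c: "c \<noteq> 0" shows "rscale c (f * g) = rscale c f * rscale c g"
proof -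
  obtain p r where f: "f = Fract p r" "r \<noteq> 0" by (cases f)
  obtain p' r' where g: "g = Fract p' r'" "r' \<noteq> 0" by (cases g)
  show ?thesis using f g c by (simp add: rscale_Fract pcompose_mult)
qed

lemma rscale_inverse: assumes c: "c \<noteq> 0" shows "rscale c (inverse f) = inverse (rscale c f)"
proof -
  obtain p r where f: "f = Fract p r" "r \<noteq> 0" by (cases f)
  show ?thesis
  proof (cases "p = 0")
    case True
    then show ?thesis using f c rscale_Fract[of c 1 0] by (simp add: fract_collapse)
  qed (use f c in \<open>simp add: rscale_Fract\<close>)
qed

lemma rscale_nonzero: assumes c: "c \<noteq> 0" and f: "f \<noteq> 0" shows "rscale c f \<noteq> 0"
proof -
  obtain p r where fr: "f = Fract p r" "r \<noteq> 0" by (cases f)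
  then have "p \<noteq> 0" using f fract_collapse(1) by auto
  then have "dilate c r \<noteq> 0" "dilate c p \<noteq> 0" using dilate_nonzero[OF c] fr by auto
  then show ?thesis using fr rscale_Fract[OF c fr(2)] Fract_eq_0_iff[of "dilate c r" "dilate c p"] by simp
qed

lemma rscale_rscale: assumes "c \<noteq> 0" "c' \<noteq> 0" shows "rscale c (rscale c' f) = rscale (c' * c) f"
proof -
  obtain p r where f: "f = Fract p r" "r \<noteq> 0" by (cases f)
  show ?thesis using f assms dilate_nonzero[of c' r] by (simp add: rscale_Fract dilate_dilate)
qed

lemma rscale_power: "c \<noteq> 0 \<Longrightarrow> rscale c (f ^ m) = rscale c f ^ m"
  by (induction m) (auto simp: rscale_mult)

lemma rscale_powi: "c \<noteq> 0 \<Longrightarrow> rscale c (f powi k) = rscale c f powi k"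
  by (simp add: power_int_def rscale_power rscale_inverse power_inverse[symmetric])

lemma rscale_lin: "c \<noteq> 0 \<Longrightarrow> rscale c (Fract [:1, - a:] 1) = Fract [:1, - (a * c):] 1"
  by (simp add: rscale_Fract pcompose_pCons pcompose_1)

lemma lin_nonzero: "Fract [:1, - a:] 1 \<noteq> (0 :: ratfun)"
  using Fract_eq_0_iff[of 1 "[:1, - a:]"] by simp

inductive_set lin_monoid :: "ratfun set" where
  one: "1 \<in> lin_monoid"
| gen: "a \<noteq> 0 \<Longrightarrow> Fract [:1, - a:] 1 \<in> lin_monoid"
| mul: "f \<in> lin_monoid \<Longrightarrow> g \<in> lin_monoid \<Longrightarrow> f * g \<in> lin_monoid"

inductive_set lin_group :: "ratfun set" where
  one: "1 \<in> lin_group"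
| gen: "a \<noteq> 0 \<Longrightarrow> Fract [:1, - a:] 1 \<in> lin_group"
| mul: "f \<in> lin_group \<Longrightarrow> g \<in> lin_group \<Longrightarrow> f * g \<in> lin_group"
| inv: "f \<in> lin_group \<Longrightarrow> inverse f \<in> lin_group"

lemma lin_monoid_lin_group: "f \<in> lin_monoid \<Longrightarrow> f \<in> lin_group"
  by (induction rule: lin_monoid.induct) (auto intro: lin_group.intros)

lemma lin_group_nonzero: "f \<in> lin_group \<Longrightarrow> f \<noteq> 0"
  by (induction rule: lin_group.induct) (auto simp: lin_nonzero)

lemma lin_monoid_rscale: assumes "c \<noteq> 0" shows "f \<in> lin_monoid \<Longrightarrow> rscale c f \<in> lin_monoid"
  by (induction rule: lin_monoid.induct) (use assms in \<open>auto simp: rscale_mult rscale_lin intro: lin_monoid.intros\<close>)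

lemma lin_group_rscale: assumes "c \<noteq> 0" shows "f \<in> lin_group \<Longrightarrow> rscale c f \<in> lin_group"
  by (induction rule: lin_group.induct)
    (use assms in \<open>auto simp: rscale_mult rscale_lin rscale_inverse intro: lin_group.intros\<close>)

lemma lin_monoid_power: "f \<in> lin_monoid \<Longrightarrow> f ^ m \<in> lin_monoid"
  by (induction m) (auto intro: lin_monoid.intros)

lemma lin_group_powi: assumes f: "f \<in> lin_group" shows "f powi k \<in> lin_group"
proof -
  have p: "g ^ m \<in> lin_group" if "g \<in> lin_group" for g m using that by (induction m) (auto intro: lin_group.intros)
  show ?thesis unfolding power_int_def using p[OF f] p[OF lin_group.inv[OF f]] by (simp add: power_inverse)
qed

lemma lin_monoid_prod: "(\<And>m. m \<in> S \<Longrightarrow> f m \<in> lin_monoid) \<Longrightarrow> (\<Prod>m\<in>S. f m) \<in> lin_monoid"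
  by (induction S rule: infinite_finite_induct) (auto intro: lin_monoid.intros)

lemma lin_group_prod: "(\<And>m. m \<in> S \<Longrightarrow> f m \<in> lin_group) \<Longrightarrow> (\<Prod>m\<in>S. f m) \<in> lin_group"
  by (induction S rule: infinite_finite_induct) (auto intro: lin_group.intros)

text \<open>Split off the linear factor of a root \<open>z \<noteq> 0\<close> given by the fundamental theorem of algebra.\<close>

lemma poly_normalized_lin_monoid:
  fixes p :: "complex poly" assumes "poly p 0 \<noteq> 0" shows "Fract p [:poly p 0:] \<in> lin_monoid"
  using assms
proof (induction "degree p" arbitrary: p rule: less_induct)
  case less
  show ?case
  proof (cases "degree p = 0")
    case True
    then obtain c where c: "p = [:c:]" by (metis degree_eq_zeroE)
    then have "c \<noteq> 0" using less.prems by simp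
    then have "Fract [:c:] [:c:] = (1 :: ratfun)" by (simp add: fract_expand(2) eq_fract)
    then show ?thesis using c lin_monoid.one by simp
  next
    case False
    then have "\<not> constant (poly p)" using constant_degree[of p] by simp
    then obtain z where z: "poly p z = 0" using fundamental_theorem_of_algebra by blast
    have z0: "z \<noteq> 0" using less.prems z by auto
    obtain p' where p': "p = [:-z, 1:] * p'" using z poly_eq_0_iff_dvd by (metis dvdE)
    have p'nz: "p' \<noteq> 0" using p' less.prems by auto
    have "degree p = degree [:-z, 1:] + degree p'" unfolding p' using p'nz by (subst degree_mult_eq) auto
    then have deg: "degree p' < degree p" by simp
    have p0: "poly p 0 = - z * poly p' 0" using p' by simp
    then have p'0: "poly p' 0 \<noteq> 0" using less.prems by auto
    have "p * [:poly p' 0:] = [:1, - (1 / z):] * p' * [:poly p 0:]"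
    proof -
      have k: "[:1, - (1 / z):] * [:- z:] = [:- z, 1:]" using z0 by simp
      have k2: "[:poly p 0:] = [:- z:] * [:poly p' 0:]" unfolding p0 by simp
      have "p * [:poly p' 0:] = ([:1, - (1 / z):] * [:- z:]) * p' * [:poly p' 0:]" unfolding k p' by simp
      also have "\<dots> = [:1, - (1 / z):] * p' * [:poly p 0:]" unfolding k2 by (simp only: mult_ac)
      finally show ?thesis .
    qed
    then have "Fract p [:poly p 0:] = Fract [:1, - (1 / z):] 1 * Fract p' [:poly p' 0:]"
      using p'0 less.prems by (simp add: eq_fract)
    then show ?thesis using lin_monoid.mul[OF lin_monoid.gen less.hyps[OF deg p'0]] z0 by simp
  qed
qed

lemma ratA_lin_group: assumes "f \<in> ratA" shows "f \<in> lin_group"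
proof -
  obtain p r where h: "f = Fract p r" "poly r 0 \<noteq> 0" "poly p 0 = poly r 0"
    using assms unfolding ratA_def by blast
  define c where "c = poly r 0"
  have "Fract p [:c:] \<in> lin_group" "Fract r [:c:] \<in> lin_group"
    using poly_normalized_lin_monoid[of p] poly_normalized_lin_monoid[of r] lin_monoid_lin_group h
    unfolding c_def by simp_all
  moreover have "f = Fract p [:c:] * inverse (Fract r [:c:])"
  proof -
    have "c \<noteq> 0" "r \<noteq> 0" using h unfolding c_def by auto
    then show ?thesis using h by (simp add: eq_fract mult.commute)
  qed
  ultimately show ?thesis by (metis lin_group.mul lin_group.inv)
qed

section \<open>Exponents in \<open>\<int>[t]\<close>\<close>

text \<open>\<open>qpow q p f = \<Prod>\<^sub>k f(q\<^sup>k u)\<^bsup>p\<^sub>k\<^esup>\<close> for \<open>p = \<Sum>\<^sub>k p\<^sub>k t\<^sup>k\<close>: the action of \<open>\<int>[t]\<close> on the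
  multiplicative group of rational functions in which \<open>t\<close> acts by \<open>f(u) \<mapsto> f(q u)\<close>.\<close>

definition qpow :: "complex \<Rightarrow> int poly \<Rightarrow> ratfun \<Rightarrow> ratfun" where
  "qpow q p = fold_coeffs (\<lambda>a g f. f powi a * g (rscale q f)) p (\<lambda>f. 1)"

lemma qpow_0 [simp]: "qpow q 0 f = 1"
  unfolding qpow_def by simp

lemma qpow_pCons: "qpow q (pCons a p) f = f powi a * qpow q p (rscale q f)"
  by (cases "p = 0 \<and> a = 0") (auto simp: qpow_def)

lemma qpow_1 [simp]: "qpow q 1 f = f"
  using qpow_pCons[of q 1 0 f] by (simp add: one_pCons)

context
  fixes q :: complex assumes q: "q \<noteq> 0"
begin

lemma qpow_nonzero: "f \<noteq> 0 \<Longrightarrow> qpow q p f \<noteq> 0"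
  by (induction p arbitrary: f rule: pCons_induct)
    (simp_all add: qpow_pCons power_int_not_zero rscale_nonzero[OF q])

lemma qpow_add: "f \<noteq> 0 \<Longrightarrow> qpow q (p + p') f = qpow q p f * qpow q p' f"
proof (induction p arbitrary: p' f rule: pCons_induct)
  case (pCons a p)
  obtain a' p'' where p': "p' = pCons a' p''" by (cases p') auto
  have "qpow q (pCons a p + p') f = f powi (a + a') * qpow q (p + p'') (rscale q f)"
    unfolding p' by (simp add: qpow_pCons)
  also have "\<dots> = (f powi a * f powi a') * (qpow q p (rscale q f) * qpow q p'' (rscale q f))"
    using pCons.IH[OF rscale_nonzero[OF q pCons.prems]] pCons.prems by (simp add: power_int_add)
  finally show ?case unfolding p' qpow_pCons by (simp add: ac_simps)
qed simp

lemma qpow_uminus: "qpow q (- p) f = inverse (qpow q p f)"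
  by (induction p arbitrary: f rule: pCons_induct) (simp_all add: qpow_pCons power_int_minus)

lemma qpow_mult: "qpow q p (f * g) = qpow q p f * qpow q p g"
  by (induction p arbitrary: f g rule: pCons_induct)
    (simp_all add: qpow_pCons power_int_mult_distrib rscale_mult[OF q] ac_simps)

lemma qpow_inverse: "qpow q p (inverse f) = inverse (qpow q p f)"
  by (induction p arbitrary: f rule: pCons_induct)
    (simp_all add: qpow_pCons power_int_inverse rscale_inverse[OF q])

lemma qpow_one: "qpow q p 1 = 1"
  by (induction p rule: pCons_induct) (simp_all add: qpow_pCons q)

lemma qpow_prod: "qpow q p (\<Prod>m\<in>S. f m) = (\<Prod>m\<in>S. qpow q p (f m))"
  by (induction S rule: infinite_finite_induct) (simp_all add: qpow_one qpow_mult)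

lemma qpow_rscale: "c \<noteq> 0 \<Longrightarrow> rscale c (qpow q p f) = qpow q p (rscale c f)"
proof (induction p arbitrary: f rule: pCons_induct)
  case (pCons a p)
  have "rscale c (rscale q f) = rscale q (rscale c f)" using rscale_rscale q pCons.prems by (simp add: mult.commute)
  then show ?case using pCons by (simp add: qpow_pCons rscale_mult rscale_powi)
qed simp

lemma qpow_tvar_power: "qpow q (tvar ^ k * p) f = rscale (q ^ k) (qpow q p f)"
proof (induction k arbitrary: f)
  case (Suc k)
  have "qpow q (tvar ^ Suc k * p) f = qpow q (tvar ^ k * p) (rscale q f)"
    by (simp add: tvar_def mult.assoc qpow_pCons)
  also have "\<dots> = rscale (q ^ k) (rscale q (qpow q p f))" using Suc qpow_rscale[OF q] by simp
  finally show ?case using rscale_rscale[OF _ q] q by (simp add: mult.commute)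
qed simp

lemma qpow_smult: "qpow q (Polynomial.smult a p) f = qpow q p f powi a"
  by (induction p arbitrary: f rule: pCons_induct)
    (simp_all add: qpow_pCons power_int_mult_distrib power_int_mult[symmetric] mult.commute)

lemma qpow_mult_poly: "f \<noteq> 0 \<Longrightarrow> qpow q (p * p') f = qpow q p (qpow q p' f)"
proof (induction p arbitrary: f rule: pCons_induct)
  case (pCons a p)
  have "qpow q (pCons a p * p') f = qpow q (Polynomial.smult a p') f * qpow q (pCons 0 (p * p')) f"
    using qpow_add[OF pCons.prems] by simp
  also have "\<dots> = qpow q p' f powi a * qpow q p (qpow q p' (rscale q f))"
    using pCons.IH[OF rscale_nonzero[OF q pCons.prems]] by (simp add: qpow_smult qpow_pCons)
  finally show ?case by (simp add: qpow_pCons qpow_rscale[OF q])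
qed simp

lemma qpow_lin_monoid: "nonneg_coeffs p \<Longrightarrow> f \<in> lin_monoid \<Longrightarrow> qpow q p f \<in> lin_monoid"
proof (induction p arbitrary: f rule: pCons_induct)
  case (pCons a p)
  then have "0 \<le> a" "nonneg_coeffs p" using nonneg_coeffs_pCons by blast+
  then show ?case
    using pCons lin_monoid_power[OF pCons.prems(2), of "nat a"] lin_monoid_rscale[OF q]
    by (auto simp: qpow_pCons power_int_def intro: lin_monoid.mul)
qed (simp add: lin_monoid.one)

lemma qpow_lin_group: "f \<in> lin_group \<Longrightarrow> qpow q p f \<in> lin_group"
  by (induction p arbitrary: f rule: pCons_induct)
    (auto simp: qpow_pCons intro: lin_group.intros lin_group_powi lin_group_rscale[OF q])

end

section \<open>The braid group action\<close>

definition punit :: "nat \<Rightarrow> nat \<Rightarrow> int poly" where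
  "punit m = (\<lambda>l. if l = m then 1 else 0)"

locale quantum_cartan = simple_cartan_matrix +
  fixes q :: complex
  assumes q_nonzero: "q \<noteq> 0"
begin

abbreviation TB where "TB \<equiv> Tbraid n A d q"
abbreviation TW where "TW \<equiv> Tword n A d q"

definition nonzero_tuple :: "(nat \<Rightarrow> ratfun) \<Rightarrow> bool" where
  "nonzero_tuple x \<longleftrightarrow> (\<forall>m\<in>{1..n}. x m \<noteq> 0) \<and> (\<forall>m. m \<notin> {1..n} \<longrightarrow> x m = 1)"

lemma nonzero_tupleD: "nonzero_tuple x \<Longrightarrow> x k \<noteq> 0"
  unfolding nonzero_tuple_def by (cases "k \<in> {1..n}") auto

lemma qpow_tvar_power_1: "qpow q (tvar ^ k) f = rscale (q ^ k) f"
  using qpow_tvar_power[OF q_nonzero, of k 1] by simp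

lemma Tbraid_self: "a \<in> {1..n} \<Longrightarrow> TB a y a = qpow q (- (tvar ^ (2 * d a))) (y a)"
  by (simp add: Tbraid_def qpow_uminus[OF q_nonzero] qpow_tvar_power_1)

lemma Tbraid_other:
  assumes "k \<in> {1..n}" "k \<noteq> a" "y a \<noteq> 0"
  shows "TB a y k = y k * qpow q (bond_poly k a) (y a)"
proof -
  have "qpow q tvar f = rscale q f" for f using qpow_tvar_power_1[of 1] by simp
  then show ?thesis
    using assms by (auto simp: Tbraid_def bond_poly_def qpow_add[OF q_nonzero] qpow_tvar_power_1 mult.assoc)
qed

lemma Tword_outside: "k \<notin> {1..n} \<Longrightarrow> TW \<rho> x k = x k"
  by (induction \<rho>) (auto simp: Tbraid_def)

lemma Tword_eq_prod_qpow:
  assumes x: "nonzero_tuple x" and "k \<in> {1..n}" and "set \<rho> \<subseteq> {1..n}"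
  shows "TW \<rho> x k = (\<Prod>m\<in>{1..n}. qpow q (qword \<rho> (punit m) k) (x m))"
  using assms(2,3)
proof (induction \<rho> arbitrary: k)
  case Nil
  have "(\<Prod>m\<in>{1..n}. qpow q (punit m k) (x m)) = (\<Prod>m\<in>{1..n}. if k = m then x m else 1)"
    by (rule prod.cong) (auto simp: punit_def)
  then show ?case using Nil by simp
next
  case (Cons a \<rho>)
  have a: "a \<in> {1..n}" and s: "set \<rho> \<subseteq> {1..n}" using Cons.prems by auto
  define M where "M l m = qword \<rho> (punit m) l" for l m
  define y where "y = TW \<rho> x"
  have y: "y l = (\<Prod>m\<in>{1..n}. qpow q (M l m) (x m))" if "l \<in> {1..n}" for l
    using Cons.IH[OF that s] unfolding y_def M_def by simp
  have x0: "x m \<noteq> 0" for m using x by (rule nonzero_tupleD)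
  have ya: "y a \<noteq> 0" using y[OF a] qpow_nonzero[OF q_nonzero x0] by simp
  have qpow_y: "qpow q p (y a) = (\<Prod>m\<in>{1..n}. qpow q (p * M a m) (x m))" for p
    using y[OF a] by (simp add: qpow_prod[OF q_nonzero] qpow_mult_poly[OF q_nonzero x0])
  show ?case
  proof (cases "k = a")
    case True
    then show ?thesis using a Tbraid_self[OF a, of y] qpow_y unfolding y_def M_def by (simp add: qrefl_def)
  next
    case False
    have "TW (a # \<rho>) x k = y k * qpow q (bond_poly k a) (y a)"
      using Tbraid_other[of k a y] Cons.prems(1) False ya unfolding y_def by simp
    also have "\<dots> = (\<Prod>m\<in>{1..n}. qpow q (M k m + bond_poly k a * M a m) (x m))"
      using y[OF Cons.prems(1)] qpow_y by (simp add: qpow_add[OF q_nonzero x0] prod.distrib)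
    finally show ?thesis using False Cons.prems(1) by (simp add: M_def qrefl_def)
  qed
qed

lemma nonzero_tuple_Tword:
  assumes x: "nonzero_tuple x" and s: "set \<rho> \<subseteq> {1..n}" shows "nonzero_tuple (TW \<rho> x)"
  unfolding nonzero_tuple_def
proof safe
  fix m assume m: "m \<in> {1..n}" and z: "TW \<rho> x m = 0"
  have "(\<Prod>l\<in>{1..n}. qpow q (qword \<rho> (punit l) m) (x l)) \<noteq> 0"
    using qpow_nonzero[OF q_nonzero nonzero_tupleD[OF x]] by simp
  then show False using Tword_eq_prod_qpow[OF x m s] z by simp
next
  fix m assume "m \<notin> {1..n}" then show "TW \<rho> x m = 1" using Tword_outside x unfolding nonzero_tuple_def by simp
qed

text \<open>\<open>y (T\<^sub>a y)\<^sup>-\<^sup>1\<close> as a function of \<open>f = y\<^sub>a\<close>.\<close>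

definition alpha_tuple :: "nat \<Rightarrow> ratfun \<Rightarrow> (nat \<Rightarrow> ratfun)" where
  "alpha_tuple a f = (\<lambda>k. if k \<notin> {1..n} then 1 else if k = a then f * rscale (q ^ (2 * d a)) f
     else inverse (qpow q (bond_poly k a) f))"

lemma ratio_Tbraid:
  assumes y: "nonzero_tuple y" and a: "a \<in> {1..n}" shows "tmul y (tinv (TB a y)) = alpha_tuple a (y a)"
proof
  fix k
  show "tmul y (tinv (TB a y)) k = alpha_tuple a (y a) k"
  proof (cases "k \<in> {1..n} \<and> k \<noteq> a")
    case True
    then show ?thesis using Tbraid_other[of k a y] nonzero_tupleD[OF y]
      by (simp add: tmul_def tinv_def alpha_tuple_def inverse_mult_distrib)
  qed (use y in \<open>auto simp: nonzero_tuple_def tmul_def tinv_def Tbraid_def alpha_tuple_def\<close>)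
qed

lemma alpha_tuple_mult: "alpha_tuple a (f * g) = tmul (alpha_tuple a f) (alpha_tuple a g)"
  unfolding alpha_tuple_def tmul_def
  by (auto simp: fun_eq_iff rscale_mult q_nonzero qpow_mult[OF q_nonzero] inverse_mult_distrib ac_simps)

lemma alpha_tuple_inverse: "alpha_tuple a (inverse f) = tinv (alpha_tuple a f)"
  unfolding alpha_tuple_def tinv_def
  by (auto simp: fun_eq_iff rscale_inverse q_nonzero qpow_inverse[OF q_nonzero] inverse_mult_distrib)

lemma alpha_tuple_1: "alpha_tuple a 1 = tone"
  unfolding alpha_tuple_def tone_def by (auto simp: fun_eq_iff q_nonzero qpow_one[OF q_nonzero])

lemma alpha_eq_alpha_tuple: "a \<in> {1..n} \<Longrightarrow> alpha n A d q a c = alpha_tuple a (Fract [:1, - c:] 1)"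
  using ratio_Tbraid[of "omega a c" a] lin_nonzero
  by (simp add: alpha_def omega_def nonzero_tuple_def tmul_def mult.commute)

lemma alpha_tuple_Qq_plus:
  assumes "a \<in> {1..n}" shows "f \<in> lin_monoid \<Longrightarrow> alpha_tuple a f \<in> Qq_plus n A d q"
  by (induction rule: lin_monoid.induct)
    (use assms in \<open>auto simp: alpha_tuple_1 alpha_tuple_mult alpha_eq_alpha_tuple[symmetric] intro: Qq_plus.intros\<close>)

lemma alpha_tuple_Qq:
  assumes "a \<in> {1..n}" shows "f \<in> lin_group \<Longrightarrow> alpha_tuple a f \<in> Qq n A d q"
  by (induction rule: lin_group.induct)
    (use assms in \<open>auto simp: alpha_tuple_1 alpha_tuple_mult alpha_tuple_inverse alpha_eq_alpha_tuple[symmetric]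
      intro: Qq.intros\<close>)

lemma ratio_Tword_Cons:
  assumes x: "nonzero_tuple x" and a: "a \<in> {1..n}" and s: "set \<rho> \<subseteq> {1..n}"
  shows "tmul x (tinv (TW (a # \<rho>) x)) = tmul (tmul x (tinv (TW \<rho> x))) (alpha_tuple a (TW \<rho> x a))"
proof -
  define y where "y = TW \<rho> x"
  have y: "nonzero_tuple y" unfolding y_def by (rule nonzero_tuple_Tword[OF x s])
  have "tmul x (tinv (TB a y)) = tmul (tmul x (tinv y)) (tmul y (tinv (TB a y)))"
    unfolding tmul_def tinv_def using nonzero_tupleD[OF y] by (auto simp: fun_eq_iff)
  then show ?thesis using ratio_Tbraid[OF y a] unfolding y_def by simp
qed

lemma ratio_Tword_Nil: "nonzero_tuple x \<Longrightarrow> tmul x (tinv (TW [] x)) = tone"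
  unfolding tmul_def tinv_def tone_def using nonzero_tupleD by (auto simp: fun_eq_iff)

lemma Pq_plus_lin_monoid: "x \<in> Pq_plus n \<Longrightarrow> (\<forall>m\<in>{1..n}. x m \<in> lin_monoid) \<and> (\<forall>m. m \<notin> {1..n} \<longrightarrow> x m = 1)"
  by (induction rule: Pq_plus.induct) (auto simp: tone_def omega_def tmul_def intro: lin_monoid.intros)

lemma Pq_nonzero_tuple: "x \<in> Pq n \<Longrightarrow> nonzero_tuple x"
  unfolding Pq_def nonzero_tuple_def using ratA_lin_group lin_group_nonzero by blast

lemma Pq_plus_nonzero_tuple: "x \<in> Pq_plus n \<Longrightarrow> nonzero_tuple x"
  using Pq_plus_lin_monoid lin_group_nonzero lin_monoid_lin_group unfolding nonzero_tuple_def by blast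

theorem ratio_Tword_Qq:
  assumes x: "x \<in> Pq n" shows "set w \<subseteq> {1..n} \<Longrightarrow> tmul x (tinv (TW w x)) \<in> Qq n A d q"
proof (induction w)
  case Nil then show ?case using ratio_Tword_Nil[OF Pq_nonzero_tuple[OF x]] by (simp add: Qq.one)
next
  case (Cons a \<rho>)
  have a: "a \<in> {1..n}" and s: "set \<rho> \<subseteq> {1..n}" using Cons.prems by auto
  have "x m \<in> lin_group" if "m \<in> {1..n}" for m using x that ratA_lin_group unfolding Pq_def by blast
  then have "TW \<rho> x a \<in> lin_group"
    unfolding Tword_eq_prod_qpow[OF Pq_nonzero_tuple[OF x] a s]
    by (intro lin_group_prod qpow_lin_group[OF q_nonzero])
  then have "alpha_tuple a (TW \<rho> x a) \<in> Qq n A d q" by (rule alpha_tuple_Qq[OF a])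
  then show ?case using ratio_Tword_Cons[OF Pq_nonzero_tuple[OF x] a s] Cons.IH[OF s] Qq.mul by simp
qed

text \<open>Only here is reducedness used, to make the exponents \<open>qword \<rho> (punit m) a\<close> nonnegative.\<close>

theorem ratio_Tword_Qq_plus:
  assumes x: "x \<in> Pq_plus n" shows "reduced w \<Longrightarrow> tmul x (tinv (TW w x)) \<in> Qq_plus n A d q"
proof (induction w)
  case Nil then show ?case using ratio_Tword_Nil[OF Pq_plus_nonzero_tuple[OF x]] by (simp add: Qq_plus.one)
next
  case (Cons a \<rho>)
  have a: "a \<in> {1..n}" and s: "set \<rho> \<subseteq> {1..n}" using Cons.prems unfolding reduced_def by auto
  have "qpow q (qword \<rho> (punit m) a) (x m) \<in> lin_monoid" if "m \<in> {1..n}" for m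
    using qword_nonneg[OF Cons.prems, of "punit m"] Pq_plus_lin_monoid[OF x] that
    by (intro qpow_lin_monoid[OF q_nonzero]) (auto simp: punit_def)
  then have "TW \<rho> x a \<in> lin_monoid"
    unfolding Tword_eq_prod_qpow[OF Pq_plus_nonzero_tuple[OF x] a s] by (rule lin_monoid_prod)
  then have "alpha_tuple a (TW \<rho> x a) \<in> Qq_plus n A d q" by (rule alpha_tuple_Qq_plus[OF a])
  then show ?case
    using ratio_Tword_Cons[OF Pq_plus_nonzero_tuple[OF x] a s] Cons.IH[OF reduced_ConsD[OF Cons.prems]] Qq_plus.mul
    by simp
qed

lemma Tbraid_tinv: "TB a (tinv y) = tinv (TB a y)"
  unfolding Tbraid_def tinv_def by (auto simp: fun_eq_iff rscale_inverse q_nonzero inverse_mult_distrib)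

lemma Tword_tinv: "TW w (tinv y) = tinv (TW w y)"
  by (induction w) (auto simp: Tbraid_tinv)

theorem ratio_Tword_Qq_minus:
  assumes x: "x \<in> Pq_minus n" and w: "reduced w" shows "tmul x (tinv (TW w x)) \<in> Qq_minus n A d q"
proof -
  obtain b where b: "x = tinv b" "b \<in> Pq_plus n" using x unfolding Pq_minus_def by blast
  have "tmul x (tinv (TW w x)) = tinv (tmul b (tinv (TW w b)))"
    unfolding b(1) Tword_tinv unfolding tmul_def tinv_def by (simp add: fun_eq_iff inverse_mult_distrib)
  then show ?thesis using ratio_Tword_Qq_plus[OF b(2) w] unfolding Qq_minus_def by blast
qed

end

theorem lemma2p7:
  fixes n :: nat and A :: "nat \<Rightarrow> nat \<Rightarrow> int" and d :: "nat \<Rightarrow> nat" and q :: complex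
    and vp vp' :: "nat \<Rightarrow> ratfun" and w :: "nat list"
  assumes cartan: "simple_cartan n A d"
    and q_nz: "q \<noteq> 0"
    and q_not_root: "\<forall>m::nat. m > 0 \<longrightarrow> q ^ m \<noteq> 1"
    and hP: "vp \<in> Pq n" "vp' \<in> Pq n"
    and hw: "reduced_word n A w"
    and hT: "vp' = Tword n A d q w vp"
  shows "tmul vp (tinv vp') \<in> Qq n A d q
       \<and> (vp \<in> Pq_plus n \<longrightarrow> tmul vp (tinv vp') \<in> Qq_plus n A d q)
       \<and> (vp \<in> Pq_minus n \<longrightarrow> tmul vp (tinv vp') \<in> Qq_minus n A d q)"
proof -
  interpret quantum_cartan n A d q
    by unfold_locales (use cartan q_nz in auto)
  have w: "reduced w" using hw reduced_word_iff by simp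
  then have "set w \<subseteq> {1..n}" unfolding reduced_def by simp
  then show ?thesis
    using ratio_Tword_Qq[OF hP(1)] ratio_Tword_Qq_plus[OF _ w] ratio_Tword_Qq_minus[OF _ w] hT by simp
qed

end
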